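(* Assume $Q$ is a given probability measure and there exists $V \in \mathcal{C}=\bigcap_{i=1}^t \mathcal{C}_i$ such that $I(V|Q) < \infty$. Then for every $n\ge 1$ and $1\le i\le t$ the I-projection $P_{n,i}$ of $S_{n,i}$ onto $\mathcal{C}_i$ exists, $I(P_{n,i}|S_{n,i})<\infty$, and hence the densities $dP_{n,i}/dS_{n,i}$ defined by the algorithm exist for all $n, i$.
   Context: Let $(\Omega,\mathcal{F})$ be a measurable space and $Q$ a probability measure (PM) on it. For measures $P,Q$, the I-divergence is $I(P|Q)=\int \ln(dP/dQ)\,dP$ if $P\ll Q$ and $+\infty$ otherwise (with conventions $\ln 0=-\infty$, $\ln(a/0)=+\infty$, $0\cdot(\pm\infty)=0$); for a finite measure $Q$ with total mass $c$, $I(P|Q)=I(P|Q/c)-\ln c$. The I-projection of a (finite) measure $S$ onto a set $\mathcal{D}$ of PMs is the $R\in\mathcal{D}$ with $I(R|S)=\inf_{P\in\mathcal{D}} I(P|S)<\infty$; it exists uniquely when $\mathcal{D}$ is variation-closed and convex and some $P\in\mathcal{D}$ has $I(P|S)<\infty$. Let $\mathcal{C}_1,\dots,\mathcal{C}_t$ be variation-closed, convex sets of PMs and $\mathcal{C}=\bigcap_{i=1}^t\mathcal{C}_i$. The (primal) iterative algorithm: set $S_{0,i}=P_{0,i}=Q$ for all $i$; for $n\ge1$ and $i=1,\dots,t$ define $dS_{n,1}/dQ = (dP_{n-1,t}/dQ)\,(dP_{n-1,1}/dS_{n-1,1})^{-1}$ and $dS_{n,i}/dQ = (dP_{n,i-1}/dQ)\,(dP_{n-1,i}/dS_{n-1,i})^{-1}$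 for $i=2,\dots,t$, and let $P_{n,i}$ be the I-projection of $S_{n,i}$ onto $\mathcal{C}_i$; the index $i$ cycles through $1,\dots,t$ and then $n$ increases. The measures $S_{n,i}$ need not be PMs, and the following is assumed (Assumption A): $\sup_{n,i}\int dS_{n,i}=M_1<\infty$. *)

theory Defs
  imports "HOL-Probability.Probability"
begin

definition PMs :: "'a measure \<Rightarrow> 'a measure set" where
  "PMs Q = {P. prob_space P \<and> sets P = sets Q}"

text \<open>Total variation distance (sup form; differs from the variation norm by a factor 2).\<close>
definition tv_dist :: "'a measure \<Rightarrow> 'a measure \<Rightarrow> 'a measure \<Rightarrow> real" where
  "tv_dist Q P R = (SUP A\<in>sets Q. \<bar>measure P A - measure R A\<bar>)"

definition variation_closed :: "'a measure \<Rightarrow> 'a measure set \<Rightarrow> bool" where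
  "variation_closed Q D \<longleftrightarrow>
     (\<forall>Pk R. (\<forall>k. Pk k \<in> D) \<longrightarrow> R \<in> PMs Q \<longrightarrow>
        (\<lambda>k. tv_dist Q (Pk k) R) \<longlonglongrightarrow> 0 \<longrightarrow> R \<in> D)"

definition mix :: "'a measure \<Rightarrow> real \<Rightarrow> 'a measure \<Rightarrow> 'a measure \<Rightarrow> 'a measure" where
  "mix Q a P R = measure_of (space Q) (sets Q)
      (\<lambda>A. ennreal a * emeasure P A + ennreal (1 - a) * emeasure R A)"

definition convex_PMs :: "'a measure \<Rightarrow> 'a measure set \<Rightarrow> bool" where
  "convex_PMs Q D \<longleftrightarrow> (\<forall>P\<in>D. \<forall>R\<in>D. \<forall>a\<in>{0..1}. mix Q a P R \<in> D)"

text \<open>I-divergence I(P|R) = int ln(dP/dR) dP if P << R, +infinity otherwise.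
  The integral is split into positive and negative parts of the log-density.\<close>
definition Idiv :: "'a measure \<Rightarrow> 'a measure \<Rightarrow> ereal" where
  "Idiv P R = (if sets P = sets R \<and> absolutely_continuous R P then
      enn2ereal (\<integral>\<^sup>+x. ennreal (max 0 (ln (enn2real (RN_deriv R P x)))) \<partial>P)
      - enn2ereal (\<integral>\<^sup>+x. ennreal (max 0 (- ln (enn2real (RN_deriv R P x)))) \<partial>P)
    else \<infinity>)"

definition is_Iproj :: "'a measure \<Rightarrow> 'a measure set \<Rightarrow> 'a measure \<Rightarrow> bool" where
  "is_Iproj S D R \<longleftrightarrow> R \<in> D \<and> Idiv R S = (INF P\<in>D. Idiv P S) \<and> Idiv R S < \<infinity>"

definition Iproj :: "'a measure \<Rightarrow> 'a measure set \<Rightarrow> 'a measure" where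
  "Iproj S D = (SOME R. is_Iproj S D R)"

text \<open>The iterative algorithm: Ialg Q C t n i = (S_{n,i}, P_{n,i}) for n \<ge> 0, 1 \<le> i \<le> t.\<close>
fun Ialg :: "'a measure \<Rightarrow> (nat \<Rightarrow> 'a measure set) \<Rightarrow> nat \<Rightarrow> nat \<Rightarrow> nat \<Rightarrow> 'a measure \<times> 'a measure" where
  "Ialg Q C t 0 i = (Q, Q)"
| "Ialg Q C t (Suc m) 0 = (Q, Q)"
| "Ialg Q C t (Suc m) (Suc 0) =
     (let S = density Q (\<lambda>x. RN_deriv Q (snd (Ialg Q C t m t)) x *
                inverse (RN_deriv (fst (Ialg Q C t m 1)) (snd (Ialg Q C t m 1)) x))
      in (S, Iproj S (C 1)))"
| "Ialg Q C t (Suc m) (Suc (Suc j)) =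
     (let S = density Q (\<lambda>x. RN_deriv Q (snd (Ialg Q C t (Suc m) (Suc j))) x *
                inverse (RN_deriv (fst (Ialg Q C t m (Suc (Suc j)))) (snd (Ialg Q C t m (Suc (Suc j)))) x))
      in (S, Iproj S (C (Suc (Suc j)))))"

definition algS :: "'a measure \<Rightarrow> (nat \<Rightarrow> 'a measure set) \<Rightarrow> nat \<Rightarrow> nat \<Rightarrow> nat \<Rightarrow> 'a measure" where
  "algS Q C t n i = fst (Ialg Q C t n i)"

definition algP :: "'a measure \<Rightarrow> (nat \<Rightarrow> 'a measure set) \<Rightarrow> nat \<Rightarrow> nat \<Rightarrow> nat \<Rightarrow> 'a measure" where
  "algP Q C t n i = snd (Ialg Q C t n i)"

end

theory Submission
  imports Defs "HOL-Real_Asymp.Real_Asymp"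
begin

text \<open>
  Everything rests on two properties of the I-projection \<open>R\<close> of a finite measure \<open>S\<close> onto a
  variation-closed convex set \<open>D\<close> of PMs. First, it exists as soon as some \<open>P \<in> D\<close> has
  \<open>I(P|S) < \<infinity>\<close>: quantitative strict convexity of \<open>x ln x\<close> at midpoints, applied to the midpoint
  mixture of two members of \<open>D\<close>, bounds their \<open>L\<^sup>1\<close> distance by the excess of their divergences
  over the infimum, so a minimizing sequence is Cauchy in \<open>L\<^sup>1\<close>; a subsequence converges almost
  everywhere and in \<open>L\<^sup>1\<close>, its limit lies in \<open>D\<close> because \<open>D\<close> is variation-closed, and by Fatou's
  lemma it attains the infimum. Second, comparing \<open>R\<close> with the mixtures \<open>(1 - a) R + a V\<close> and
  letting \<open>a \<rightarrow> 0\<close> gives \<open>I(V|R) \<le> I(V|S) - I(R|S) < \<infinity>\<close> for every \<open>V \<in> D\<close> with \<open>I(V|S) < \<infinity>\<close>.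

  Now fix \<open>V\<close> in all \<open>C\<^sub>i\<close> with \<open>I(V|Q) < \<infinity>\<close>. Along the algorithm \<open>V\<close> keeps finite divergence
  from every \<open>S_{n,i}\<close> and \<open>P_{n,i}\<close>: since \<open>dS_{n,i}/dQ\<close> is the quotient of \<open>dP_{n,i-1}/dQ\<close> by
  \<open>dP_{n-1,i}/dS_{n-1,i}\<close>, the log-likelihood ratio of \<open>V\<close> against \<open>S_{n,i}\<close> is an integrable
  combination of those against \<open>P_{n,i-1}\<close>, \<open>S_{n-1,i}\<close> and \<open>P_{n-1,i}\<close>. So \<open>V\<close> witnesses the
  existence of \<open>P_{n,i}\<close>, and the second property keeps \<open>I(V|P_{n,i})\<close> finite.
\<close>

section \<open>The function \<open>x ln x\<close>\<close>

definition xlx :: "real \<Rightarrow> real" where "xlx x = x * ln x"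

lemma xlx_0 [simp]: "xlx 0 = 0"
  by (simp add: xlx_def)

lemma borel_measurable_xlx [measurable (raw)]:
  assumes [measurable]: "f \<in> borel_measurable M"
  shows "(\<lambda>x. xlx (f x)) \<in> borel_measurable M"
  unfolding xlx_def by measurable

lemma ln_ge_one_minus_inverse: "0 < (x::real) \<Longrightarrow> 1 - 1 / x \<le> ln x"
  using ln_le_minus_one[of "1 / x"] by (simp add: ln_div)

lemma xlx_tangent_le:
  assumes x: "0 < x" and y: "0 \<le> y"
  shows "xlx x + (ln x + 1) * (y - x) \<le> xlx y"
proof (cases "y = 0")
  case True
  then show ?thesis using x by (simp add: xlx_def algebra_simps)
next
  case False
  with y have y: "0 < y" by simp
  have "y * (1 - x / y) \<le> y * ln (y / x)"
    using ln_ge_one_minus_inverse[of "y / x"] x y by (intro mult_left_mono) auto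
  moreover have "y * (1 - x / y) = y - x" "ln (y / x) = ln y - ln x"
    using x y by (simp_all add: ln_div field_simps)
  ultimately have "y - x \<le> y * (ln y - ln x)" by simp
  then show ?thesis by (simp add: xlx_def algebra_simps)
qed

lemma mult_xlx_divide:
  assumes r: "0 < r" and v: "0 \<le> v"
  shows "r * xlx (v / r) = (v * ln v - v * ln r - v + r) + (v - r)"
proof (cases "v = 0")
  case False
  with v have "0 < v" by simp
  then show ?thesis
    using r by (simp add: xlx_def ln_div algebra_simps)
qed simp

lemma xlx_ge_minus_one: "0 \<le> x \<Longrightarrow> -1 \<le> xlx x"
  using xlx_tangent_le[of 1 x] by (simp add: xlx_def)

lemma xlx_convex:
  assumes r: "0 \<le> r" and v: "0 \<le> v" and a: "0 \<le> a" "a \<le> 1"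
  shows "xlx ((1 - a) * r + a * v) \<le> (1 - a) * xlx r + a * xlx v"
proof -
  define m where "m = (1 - a) * r + a * v"
  have "0 \<le> m" using r v a by (simp add: m_def)
  show ?thesis
  proof (cases "m = 0")
    case True
    then have "(1 - a) * r = 0" "a * v = 0"
      using r v a unfolding m_def by (smt (verit) mult_nonneg_nonneg)+
    then show ?thesis using True by (auto simp: m_def xlx_def)
  next
    case False
    with \<open>0 \<le> m\<close> have m: "0 < m" by simp
    have "(1 - a) * (xlx m + (ln m + 1) * (r - m)) + a * (xlx m + (ln m + 1) * (v - m))
        \<le> (1 - a) * xlx r + a * xlx v"
      using xlx_tangent_le[OF m r] xlx_tangent_le[OF m v] a by (intro add_mono mult_left_mono) auto
    moreover have "(1 - a) * (xlx m + (ln m + 1) * (r - m)) + a * (xlx m + (ln m + 1) * (v - m)) = xlx m"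
      by (simp add: m_def algebra_simps)
    ultimately show ?thesis by (simp add: m_def)
  qed
qed

lemma xlx_quadratic_lower:
  assumes g: "0 \<le> g" "g \<le> 2"
  shows "(g - 1)\<^sup>2 / 4 \<le> xlx g - g + 1"
proof -
  define h where "h g = xlx g - g + 1 - (g - 1)\<^sup>2 / 4" for g :: real
  have D: "DERIV h x :> ln x - (x - 1) / 2" if "0 < x" for x
    unfolding h_def xlx_def using that
    by (auto intro!: derivative_eq_intros simp: power2_eq_square field_simps)
  have "h 1 \<le> h g"
  proof (cases "g \<le> 1")
    case True
    show ?thesis
    proof (cases "g = 0")
      case False
      with g have "0 < g" by simp
      show ?thesis
      proof (rule DERIV_nonpos_imp_nonincreasing[OF True])
        fix x assume x: "g \<le> x" "x \<le> 1"
        with \<open>0 < g\<close> have "0 < x" by simp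
        then have "ln x - (x - 1) / 2 \<le> 0" using ln_le_minus_one[of x] x by simp
        then show "\<exists>y. DERIV h x :> y \<and> y \<le> 0" using D[OF \<open>0 < x\<close>] by blast
      qed
    qed (simp add: h_def xlx_def)
  next
    case False
    then have "1 \<le> g" by simp
    then show ?thesis
    proof (rule DERIV_nonneg_imp_nondecreasing)
      fix x assume x: "1 \<le> x" "x \<le> g"
      then have "0 < x" by simp
      have "(x - 1) / 2 \<le> 1 - 1 / x"
      proof -
        have "0 \<le> (x - 1) * (2 - x) / (2 * x)" using x g by (intro divide_nonneg_nonneg mult_nonneg_nonneg) auto
        moreover have "1 - 1 / x - (x - 1) / 2 = (x - 1) * (2 - x) / (2 * x)" using \<open>0 < x\<close> by (simp add: field_simps)
        ultimately show ?thesis by linarith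
      qed
      then have "0 \<le> ln x - (x - 1) / 2" using ln_ge_one_minus_inverse[OF \<open>0 < x\<close>] by simp
      then show "\<exists>y. DERIV h x :> y \<and> 0 \<le> y" using D[OF \<open>0 < x\<close>] by blast
    qed
  qed
  moreover have "h 1 = 0" by (simp add: h_def xlx_def)
  ultimately show ?thesis by (simp add: h_def)
qed

lemma xlx_midpoint_gap:
  assumes a: "0 \<le> a" and b: "0 \<le> b" and m: "m = (a + b) / 2" "0 < m"
  shows "(a - b)\<^sup>2 / (8 * m) \<le> xlx a + xlx b - 2 * xlx m"
proof -
  have scaled: "(c - m)\<^sup>2 / (4 * m) \<le> c * ln c - c * ln m - c + m" if "0 \<le> c" "c \<le> 2 * m" for c
  proof -
    have "m * ((c / m - 1)\<^sup>2 / 4) \<le> m * (xlx (c / m) - c / m + 1)"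
      using that m by (intro mult_left_mono xlx_quadratic_lower) (auto simp: field_simps)
    moreover have "m * ((c / m - 1)\<^sup>2 / 4) = (c - m)\<^sup>2 / (4 * m)"
      using m by (simp add: field_simps power2_eq_square)
    moreover have "m * (xlx (c / m) - c / m + 1) = c * ln c - c * ln m - c + m"
      using m that by (cases "c = 0") (auto simp: xlx_def ln_div field_simps)
    ultimately show ?thesis by simp
  qed
  have am: "a - m = (a - b) / 2" and bm: "b - m = - ((a - b) / 2)"
    using m(1) by (simp_all add: field_simps)
  have "(a - b)\<^sup>2 / (8 * m) = (a - m)\<^sup>2 / (4 * m) + (b - m)\<^sup>2 / (4 * m)"
    unfolding am bm using m(2) by (simp add: field_simps power2_eq_square)
  also have "\<dots> \<le> (a * ln a - a * ln m - a + m) + (b * ln b - b * ln m - b + m)"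
    using a b m(1) by (intro add_mono scaled) auto
  also have "\<dots> = xlx a + xlx b - 2 * xlx m"
  proof -
    have "a * ln m + b * ln m = 2 * (m * ln m)" using m(1) by (simp flip: distrib_right)
    then show ?thesis using m(1) unfolding xlx_def by argo
  qed
  finally show ?thesis .
qed

lemma abs_diff_le_xlx_midpoint_gap:
  assumes a: "0 \<le> a" and b: "0 \<le> b" and e: "0 < e"
  shows "\<bar>a - b\<bar> \<le> e * ((a + b) / 2) + (2 / e) * (xlx a + xlx b - 2 * xlx ((a + b) / 2))"
proof (cases "a + b = 0")
  case True
  then have "a = 0" "b = 0" using a b by auto
  then show ?thesis by simp
next
  case False
  define m where "m = (a + b) / 2"
  have m: "0 < m" using a b False by (simp add: m_def)
  \<comment> \<open>AM-GM: \<open>\<bar>a - b\<bar> \<le> e m + (a - b)\<^sup>2 / (4 e m)\<close>\<close>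
  have "4 * e * m * \<bar>a - b\<bar> \<le> (a - b)\<^sup>2 + 4 * e\<^sup>2 * m\<^sup>2"
    using sum_squares_ge_zero[of "\<bar>a - b\<bar> - 2 * e * m" 0] by (simp add: power2_eq_square algebra_simps)
  then have "\<bar>a - b\<bar> \<le> e * m + (2 / e) * ((a - b)\<^sup>2 / (8 * m))"
    using e m by (simp add: field_simps power2_eq_square)
  also have "\<dots> \<le> e * m + (2 / e) * (xlx a + xlx b - 2 * xlx m)"
    using xlx_midpoint_gap[OF a b m_def m] e by (intro add_left_mono mult_left_mono) auto
  finally show ?thesis by (simp add: m_def)
qed

lemma isCont_xlx: "isCont xlx x"
proof (cases "x = 0")
  case True
  have "((\<lambda>x. x * ln x) \<longlongrightarrow> 0) (at_right (0::real))" by real_asymp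
  moreover have "((\<lambda>x. x * ln x) \<longlongrightarrow> 0) (at_left (0::real))"
  proof -
    have "((\<lambda>x. - x * ln x) \<longlongrightarrow> 0) (at_right (0::real))" by real_asymp
    then have "((\<lambda>x. (- x) * ln (- x)) \<longlongrightarrow> 0) (at_right (- 0::real))" by (simp add: ln_minus)
    then show ?thesis by (simp add: filterlim_at_left_to_right[where a=0])
  qed
  ultimately show ?thesis
    using True by (simp add: isCont_def xlx_def[abs_def] filterlim_split_at)
next
  case False
  then show ?thesis unfolding xlx_def[abs_def] by (intro continuous_intros) auto
qed

lemma xlx_secant_le:
  assumes r: "0 \<le> r" and v: "0 \<le> v" and a: "0 < a" "a \<le> 1"
  shows "(xlx (a * v + (1 - a) * r) - xlx r) / a \<le> xlx v - xlx r"
proof -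
  have "xlx (a * v + (1 - a) * r) - xlx r \<le> a * (xlx v - xlx r)"
    using xlx_convex[OF r v, of a] a by (simp add: algebra_simps)
  then show ?thesis
    using a by (simp add: pos_divide_le_eq mult.commute)
qed

lemma xlx_secant_liminf:
  fixes a :: "nat \<Rightarrow> real"
  assumes r: "0 \<le> r" and v: "0 \<le> v"
    and a: "\<And>k. 0 < a k" "\<And>k. a k < 1" and a0: "a \<longlonglongrightarrow> 0"
  shows "(if 0 < r then ennreal (v * ln v - v * ln r - v + r) else if 0 < v then \<infinity> else 0)
    \<le> liminf (\<lambda>k. ennreal ((xlx v - xlx r) - (xlx (a k * v + (1 - a k) * r) - xlx r) / a k))"
    (is "_ \<le> liminf (\<lambda>k. ennreal (?B k))")
proof (cases "0 < r")
  case True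
  define m where "m k = a k * v + (1 - a k) * r" for k
  have m: "0 < m k" for k
    using a[of k] r v True unfolding m_def by (smt (verit) mult_nonneg_nonneg mult_pos_pos)
  \<comment> \<open>the tangent of \<open>xlx\<close> at \<open>m k\<close> bounds the secant slope\<close>
  have "xlx v - xlx r - (ln (m k) + 1) * (v - r) \<le> ?B k" for k
  proof -
    have "xlx (m k) - xlx r \<le> a k * ((ln (m k) + 1) * (v - r))"
      using xlx_tangent_le[OF m r] by (simp add: m_def algebra_simps)
    then show ?thesis
      using a[of k] by (simp add: m_def divide_le_eq mult.commute)
  qed
  then have "liminf (\<lambda>k. ennreal (xlx v - xlx r - (ln (m k) + 1) * (v - r))) \<le> liminf (\<lambda>k. ennreal (?B k))"
    by (intro Liminf_mono always_eventually allI ennreal_leI)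
  moreover have "(\<lambda>k. m k) \<longlonglongrightarrow> r"
    using a0 unfolding m_def by (auto intro!: tendsto_eq_intros)
  then have "(\<lambda>k. ennreal (xlx v - xlx r - (ln (m k) + 1) * (v - r)))
      \<longlonglongrightarrow> ennreal (v * ln v - v * ln r - v + r)"
    using True by (auto intro!: tendsto_eq_intros simp: xlx_def algebra_simps)
  ultimately show ?thesis
    using True by (simp add: lim_imp_Liminf)
next
  case False
  then have r0: "r = 0" using r by simp
  show ?thesis
  proof (cases "0 < v")
    case True
    have "?B k = v * - ln (a k)" for k
      using a[of k] True by (simp add: r0 xlx_def ln_mult field_simps)
    moreover have "filterlim a (at_right 0) sequentially"
      using a0 a(1) by (intro tendsto_imp_filterlim_at_right) auto
    then have "filterlim (\<lambda>k. ln (a k)) at_bot sequentially"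
      by (rule filterlim_compose[OF ln_at_0])
    then have "filterlim (\<lambda>k. - ln (a k)) at_top sequentially"
      by (simp add: filterlim_uminus_at_bot)
    then have "filterlim (\<lambda>k. v * - ln (a k)) at_top sequentially"
      using True by (intro filterlim_tendsto_pos_mult_at_top[OF tendsto_const])
    ultimately have "(\<lambda>k. ennreal (?B k)) \<longlonglongrightarrow> \<infinity>"
      by (simp add: ennreal_tendsto_top_eq_at_top)
    then show ?thesis
      by (simp add: lim_imp_Liminf r0)
  qed (simp add: r0)
qed

section \<open>I-divergence of densities\<close>

lemma Idiv_density:
  fixes w :: "'a \<Rightarrow> real"
  assumes X: "finite_measure X" and w[measurable]: "w \<in> borel_measurable X"
    and nn: "\<And>x. x \<in> space X \<Longrightarrow> 0 \<le> w x"
  shows "Idiv (density X (\<lambda>x. ennreal (w x))) X =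
    (if integrable X (\<lambda>x. xlx (w x)) then ereal (\<integral>x. xlx (w x) \<partial>X) else \<infinity>)"
proof -
  interpret finite_measure X by fact
  let ?P = "density X (\<lambda>x. ennreal (w x))"
  define Ip where "Ip = (\<integral>\<^sup>+x. ennreal (xlx (w x)) \<partial>X)"
  define In where "In = (\<integral>\<^sup>+x. ennreal (- xlx (w x)) \<partial>X)"
  have "AE x in X. ennreal (w x) = RN_deriv X ?P x"
    by (rule RN_deriv_unique) auto
  then have RN: "AE x in X. enn2real (RN_deriv X ?P x) = w x"
    using AE_space by eventually_elim (metis enn2real_ennreal nn)
  have part: "(\<integral>\<^sup>+x. ennreal (max 0 (s * ln (enn2real (RN_deriv X ?P x)))) \<partial>?P)
      = (\<integral>\<^sup>+x. ennreal (s * xlx (w x)) \<partial>X)" if "s = 1 \<or> s = -1" for s :: real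
    using that RN AE_space
    by (subst nn_integral_density) (auto intro!: nn_integral_cong_AE elim!: AE_mp
        simp: xlx_def nn ennreal_mult'[symmetric] ennreal_max_0 algebra_simps)
  have Idiv_eq: "Idiv ?P X = enn2ereal Ip - enn2ereal In"
    unfolding Idiv_def Ip_def In_def using part[of 1] part[of "-1"]
    by (simp add: absolutely_continuousI_density)
  have "In \<le> (\<integral>\<^sup>+x. 1 \<partial>X)"
    unfolding In_def using xlx_ge_minus_one[OF nn] by (intro nn_integral_mono) (auto simp: ennreal_le_1)
  then have In: "In < \<infinity>"
    by (simp add: less_top[symmetric] top_unique) (metis emeasure_real ennreal_neq_top neq_top_trans)
  have "(\<integral>\<^sup>+x. ennreal (norm (xlx (w x))) \<partial>X) = Ip + In"
    unfolding Ip_def In_def by (subst nn_integral_add[symmetric]) (auto intro!: nn_integral_cong simp: ennreal_neg abs_if)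
  then have int_iff: "integrable X (\<lambda>x. xlx (w x)) \<longleftrightarrow> Ip < \<infinity>"
    using In by (simp add: integrable_iff_bounded)
  show ?thesis
  proof (cases "integrable X (\<lambda>x. xlx (w x))")
    case True
    then have "(\<integral>x. xlx (w x) \<partial>X) = enn2real Ip - enn2real In"
      unfolding Ip_def In_def by (rule real_lebesgue_integral_def)
    moreover have "Ip < \<infinity>" using True int_iff by simp
    ultimately show ?thesis
      using True Idiv_eq In by (cases Ip rule: ennreal_cases; cases In rule: ennreal_cases) auto
  next
    case False
    then have "Ip = \<infinity>" using int_iff by (simp add: less_top[symmetric])
    then show ?thesis
      using False Idiv_eq In by (cases In rule: ennreal_cases) auto
  qed
qed

lemma Idiv_density_finite_iff:
  fixes w :: "'a \<Rightarrow> real"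
  assumes "finite_measure X" and "w \<in> borel_measurable X" and "\<And>x. x \<in> space X \<Longrightarrow> 0 \<le> w x"
  shows "Idiv (density X (\<lambda>x. ennreal (w x))) X < \<infinity> \<longleftrightarrow> integrable X (\<lambda>x. xlx (w x))"
  using Idiv_density[OF assms] by simp

lemma integrable_xlx_iff_integrable_ln_density:
  fixes w :: "'a \<Rightarrow> real"
  assumes [measurable]: "w \<in> borel_measurable X" and nn: "\<And>x. x \<in> space X \<Longrightarrow> 0 \<le> w x"
  shows "integrable X (\<lambda>x. xlx (w x)) \<longleftrightarrow> integrable (density X (\<lambda>x. ennreal (w x))) (\<lambda>x. ln (w x))"
  by (subst integrable_density) (auto simp: xlx_def nn)

lemma prob_space_density_integral:
  fixes w :: "'a \<Rightarrow> real"
  assumes [measurable]: "w \<in> borel_measurable X" and nn: "\<And>x. x \<in> space X \<Longrightarrow> 0 \<le> w x"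
    and P: "prob_space (density X (\<lambda>x. ennreal (w x)))"
  shows "integrable X w" "(\<integral>x. w x \<partial>X) = 1"
proof -
  have "(\<integral>\<^sup>+x. ennreal (w x) \<partial>X) = emeasure (density X (\<lambda>x. ennreal (w x))) (space X)"
    by (subst emeasure_density) (auto intro!: nn_integral_cong)
  also have "\<dots> = ennreal 1"
    using prob_space.emeasure_space_1[OF P] by simp
  finally show "integrable X w" "(\<integral>x. w x \<partial>X) = 1"
    by (subst (asm) nn_integral_eq_integrable; simp add: nn)+
qed

lemma Idiv_finite_imp_density:
  assumes X: "finite_measure X" and P: "prob_space P" and fin: "Idiv P X < \<infinity>"
  shows "sets P = sets X" "absolutely_continuous X P"
    "P = density X (\<lambda>x. ennreal (enn2real (RN_deriv X P x)))"
proof -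
  interpret finite_measure X by fact
  interpret P: prob_space P by fact
  show sP: "sets P = sets X" and ac: "absolutely_continuous X P"
    using fin unfolding Idiv_def by (auto split: if_splits)
  have "P = density X (RN_deriv X P)" using density_RN_deriv[OF ac sP] by simp
  also have "\<dots> = density X (\<lambda>x. ennreal (enn2real (RN_deriv X P x)))"
    using RN_deriv_finite[OF P.sigma_finite_measure ac sP]
    by (intro density_cong) (auto elim!: AE_mp simp: less_top[symmetric])
  finally show "P = density X (\<lambda>x. ennreal (enn2real (RN_deriv X P x)))" .
qed

lemma Idiv_finite_RN_deriv:
  assumes X: "finite_measure X" and P: "prob_space P" and fin: "Idiv P X < \<infinity>"
  defines "f \<equiv> \<lambda>x. enn2real (RN_deriv X P x)"
  shows "P = density X (\<lambda>x. ennreal (f x))" "integrable X f" "(\<integral>x. f x \<partial>X) = 1"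
    "integrable X (\<lambda>x. xlx (f x))" "Idiv P X = ereal (\<integral>x. xlx (f x) \<partial>X)"
proof -
  have f[measurable]: "f \<in> borel_measurable X" and nn: "\<And>x. 0 \<le> f x"
    unfolding f_def by simp_all
  show Pf: "P = density X (\<lambda>x. ennreal (f x))"
    unfolding f_def by (rule Idiv_finite_imp_density(3)[OF X P fin])
  show "integrable X f" "(\<integral>x. f x \<partial>X) = 1"
    using prob_space_density_integral[OF f] P Pf nn by auto
  show "integrable X (\<lambda>x. xlx (f x))" "Idiv P X = ereal (\<integral>x. xlx (f x) \<partial>X)"
    using Idiv_density[OF X f] fin nn by (simp_all add: Pf[symmetric] split: if_splits)
qed

lemma Idiv_ge_minus_measure:
  assumes X: "finite_measure X" and P: "prob_space P"
  shows "- ereal (measure X (space X)) \<le> Idiv P X"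
proof (cases "Idiv P X < \<infinity>")
  case True
  interpret finite_measure X by fact
  have "(\<integral>x. -1 \<partial>X) \<le> (\<integral>x. xlx (enn2real (RN_deriv X P x)) \<partial>X)"
    using Idiv_finite_RN_deriv(4)[OF X P True] by (intro integral_mono) (auto simp: xlx_ge_minus_one)
  then show ?thesis
    using Idiv_finite_RN_deriv(5)[OF X P True] by simp
qed (simp add: top.not_eq_extremum)

lemma mix_density:
  fixes f g :: "'a \<Rightarrow> real"
  assumes sX: "sets X = sets Q"
    and [measurable]: "f \<in> borel_measurable X" "g \<in> borel_measurable X"
    and fn: "\<And>x. x \<in> space X \<Longrightarrow> 0 \<le> f x" and gn: "\<And>x. x \<in> space X \<Longrightarrow> 0 \<le> g x"
    and a: "0 \<le> a" "a \<le> 1"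
  shows "mix Q a (density X (\<lambda>x. ennreal (f x))) (density X (\<lambda>x. ennreal (g x)))
       = density X (\<lambda>x. ennreal (a * f x + (1 - a) * g x))"
proof -
  let ?h = "density X (\<lambda>x. ennreal (a * f x + (1 - a) * g x))"
  have "mix Q a (density X (\<lambda>x. ennreal (f x))) (density X (\<lambda>x. ennreal (g x)))
      = measure_of (space Q) (sets Q) (emeasure ?h)"
    unfolding mix_def
  proof (rule measure_of_eq)
    show "sets Q \<subseteq> Pow (space Q)" by (rule sets.space_closed)
    fix A assume "A \<in> sigma_sets (space Q) (sets Q)"
    then have A: "A \<in> sets X" using sX sets.sigma_sets_eq[of Q] by simp
    have "emeasure ?h A = (\<integral>\<^sup>+x. ennreal a * (ennreal (f x) * indicator A x)
        + ennreal (1 - a) * (ennreal (g x) * indicator A x) \<partial>X)"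
      using A a fn gn by (subst emeasure_density)
        (auto intro!: nn_integral_cong simp: ennreal_plus ennreal_mult' ennreal_mult split: split_indicator)
    also have "\<dots> = ennreal a * emeasure (density X (\<lambda>x. ennreal (f x))) A
        + ennreal (1 - a) * emeasure (density X (\<lambda>x. ennreal (g x))) A"
      using A by (subst nn_integral_add) (auto simp: nn_integral_cmult emeasure_density)
    finally show "ennreal a * emeasure (density X (\<lambda>x. ennreal (f x))) A
        + ennreal (1 - a) * emeasure (density X (\<lambda>x. ennreal (g x))) A = emeasure ?h A"
      by simp
  qed
  also have "\<dots> = ?h"
    using sX sets_eq_imp_space_eq[OF sX] measure_of_of_measure[of ?h] by simp
  finally show ?thesis .
qed

lemma integrable_xlx_convex_comb:
  fixes f g :: "'a \<Rightarrow> real"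
  assumes S: "finite_measure S" and [measurable]: "f \<in> borel_measurable S" "g \<in> borel_measurable S"
    and fn: "\<And>x. 0 \<le> f x" and gn: "\<And>x. 0 \<le> g x" and a: "0 \<le> a" "a \<le> 1"
    and fi: "integrable S (\<lambda>x. xlx (f x))" and gi: "integrable S (\<lambda>x. xlx (g x))"
  shows "integrable S (\<lambda>x. xlx (a * f x + (1 - a) * g x))"
proof (rule Bochner_Integration.integrable_bound)
  show "integrable S (\<lambda>x. 1 + \<bar>xlx (f x)\<bar> + \<bar>xlx (g x)\<bar>)"
    using fi gi by (simp add: finite_measure.integrable_const[OF S])
  have "\<bar>xlx (a * f x + (1 - a) * g x)\<bar> \<le> 1 + \<bar>xlx (f x)\<bar> + \<bar>xlx (g x)\<bar>" for x
  proof -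
    have "a * xlx (f x) \<le> \<bar>xlx (f x)\<bar>" "(1 - a) * xlx (g x) \<le> \<bar>xlx (g x)\<bar>"
      using a by (auto intro: order_trans[OF mult_left_mono mult_left_le_one_le])
    moreover have "xlx (a * f x + (1 - a) * g x) \<le> (1 - a) * xlx (g x) + a * xlx (f x)"
      using xlx_convex[OF gn fn a] by (simp add: add.commute)
    moreover have "-1 \<le> xlx (a * f x + (1 - a) * g x)"
      using a fn[of x] gn[of x] by (intro xlx_ge_minus_one) simp
    ultimately show ?thesis by (simp add: abs_if)
  qed
  then show "AE x in S. norm (xlx (a * f x + (1 - a) * g x)) \<le> norm (1 + \<bar>xlx (f x)\<bar> + \<bar>xlx (g x)\<bar>)"
    by (auto intro!: AE_I2)
qed simp

lemma Idiv_density_finite_if_integrable_log_ratio: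
  fixes r v :: "'a \<Rightarrow> real"
  assumes R: "prob_space R" and Rd: "R = density S (\<lambda>x. ennreal (r x))"
    and Vd: "V = density S (\<lambda>x. ennreal (v x))"
    and [measurable]: "r \<in> borel_measurable S" "v \<in> borel_measurable S"
    and rn: "\<And>x. 0 \<le> r x" and vn: "\<And>x. 0 \<le> v x" and ri: "integrable S r" and vi: "integrable S v"
    and ac: "AE x in S. r x = 0 \<longrightarrow> v x = 0"
    and log_ratio: "integrable S (\<lambda>x. if 0 < r x then v x * ln (v x) - v x * ln (r x) - v x + r x else 0)"
  shows "Idiv V R < \<infinity>"
proof -
  define w where "w x = (if 0 < r x then v x / r x else 0)" for x
  have [measurable]: "w \<in> borel_measurable S" unfolding w_def by measurable
  have wn: "\<And>x. 0 \<le> w x" unfolding w_def using rn vn by simp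
  have sR: "sets R = sets S" using Rd by simp
  have wR[measurable]: "w \<in> borel_measurable R" by (simp add: measurable_cong_sets[OF sR refl])
  have "density R (\<lambda>x. ennreal (w x)) = density S (\<lambda>x. ennreal (r x) * ennreal (w x))"
    unfolding Rd by (rule density_density_eq) auto
  also have "\<dots> = V"
    unfolding Vd
  proof (intro density_cong)
    show "AE x in S. ennreal (r x) * ennreal (w x) = ennreal (v x)"
      using ac
    proof eventually_elim
      case (elim x)
      then show ?case
        using rn[of x] by (cases "0 < r x") (auto simp: w_def ennreal_mult'[symmetric])
    qed
  qed auto
  finally have VR: "V = density R (\<lambda>x. ennreal (w x))" ..
  have "r x * xlx (w x) = (if 0 < r x then v x * ln (v x) - v x * ln (r x) - v x + r x else 0)
      + (if 0 < r x then v x - r x else 0)" for x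
    using mult_xlx_divide[of "r x" "v x"] vn by (simp add: w_def)
  moreover have "integrable S (\<lambda>x. if 0 < r x then v x - r x else 0)"
  proof (rule Bochner_Integration.integrable_bound)
    show "integrable S (\<lambda>x. \<bar>v x\<bar> + \<bar>r x\<bar>)" using vi ri by simp
    show "AE x in S. norm (if 0 < r x then v x - r x else 0) \<le> norm (\<bar>v x\<bar> + \<bar>r x\<bar>)"
      by (rule AE_I2) auto
  qed simp
  ultimately have "integrable S (\<lambda>x. r x * xlx (w x))"
    using log_ratio by simp
  then have "integrable R (\<lambda>x. xlx (w x))"
    unfolding Rd by (subst integrable_density) (auto simp: rn)
  then show ?thesis
    unfolding VR using R by (subst Idiv_density_finite_iff) (auto simp: wn prob_space_def)
qed

section \<open>\<open>L\<^sup>1\<close> limits of densities\<close>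

lemma tv_dist_density_le:
  fixes f g :: "'a \<Rightarrow> real"
  assumes sS: "sets S = sets Q"
    and f[measurable]: "f \<in> borel_measurable S" and fn: "\<And>x. x \<in> space S \<Longrightarrow> 0 \<le> f x"
    and g[measurable]: "g \<in> borel_measurable S" and gn: "\<And>x. x \<in> space S \<Longrightarrow> 0 \<le> g x"
    and fi: "integrable S f" and gi: "integrable S g"
  shows "tv_dist Q (density S (\<lambda>x. ennreal (f x))) (density S (\<lambda>x. ennreal (g x))) \<le> (\<integral>x. \<bar>f x - g x\<bar> \<partial>S)"
    and "0 \<le> tv_dist Q (density S (\<lambda>x. ennreal (f x))) (density S (\<lambda>x. ennreal (g x)))"
proof -
  have measure_eq: "measure (density S (\<lambda>x. ennreal (h x))) A = (\<integral>x. indicator A x * h x \<partial>S)"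
    if [measurable]: "h \<in> borel_measurable S" and hn: "\<And>x. x \<in> space S \<Longrightarrow> 0 \<le> h x"
      and [measurable]: "A \<in> sets S" for h :: "'a \<Rightarrow> real" and A
  proof -
    have "measure (density S (\<lambda>x. ennreal (h x))) A = enn2real (\<integral>\<^sup>+x. ennreal (h x) * indicator A x \<partial>S)"
      by (simp add: measure_def emeasure_density)
    also have "\<dots> = (\<integral>x. indicator A x * h x \<partial>S)"
      by (rule enn2real_nn_integral_eq_integral) (auto simp: hn split: split_indicator)
    finally show ?thesis .
  qed
  have bnd: "\<bar>measure (density S (\<lambda>x. ennreal (f x))) A - measure (density S (\<lambda>x. ennreal (g x))) A\<bar>
      \<le> (\<integral>x. \<bar>f x - g x\<bar> \<partial>S)" if "A \<in> sets Q" for A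
  proof -
    have A[measurable]: "A \<in> sets S" using that sS by simp
    have "\<bar>measure (density S (\<lambda>x. ennreal (f x))) A - measure (density S (\<lambda>x. ennreal (g x))) A\<bar>
        = \<bar>\<integral>x. indicator A x * (f x - g x) \<partial>S\<bar>"
      using integrable_mult_indicator[OF A fi] integrable_mult_indicator[OF A gi]
      by (simp add: measure_eq fn gn right_diff_distrib)
    also have "\<dots> \<le> (\<integral>x. \<bar>indicator A x * (f x - g x)\<bar> \<partial>S)"
      by (rule integral_abs_bound)
    also have "\<dots> \<le> (\<integral>x. \<bar>f x - g x\<bar> \<partial>S)"
      using integrable_mult_indicator[OF A Bochner_Integration.integrable_diff[OF fi gi]] fi gi
      by (intro integral_mono integrable_abs) (auto simp: abs_mult split: split_indicator)
    finally show ?thesis .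
  qed
  show "tv_dist Q (density S (\<lambda>x. ennreal (f x))) (density S (\<lambda>x. ennreal (g x))) \<le> (\<integral>x. \<bar>f x - g x\<bar> \<partial>S)"
    unfolding tv_dist_def by (rule cSUP_least) (auto intro: bnd)
  show "0 \<le> tv_dist Q (density S (\<lambda>x. ennreal (f x))) (density S (\<lambda>x. ennreal (g x)))"
    unfolding tv_dist_def by (rule cSUP_upper2[where x="{}"]) (auto intro!: bdd_aboveI2 bnd)
qed

lemma Cauchy_geometric_subseq:
  fixes d :: "nat \<Rightarrow> nat \<Rightarrow> real"
  assumes Cauchy: "\<And>\<delta>. 0 < \<delta> \<Longrightarrow> \<exists>N. \<forall>k\<ge>N. \<forall>l\<ge>N. d k l < \<delta>"
  obtains \<sigma> where "strict_mono \<sigma>" "\<And>j l. j \<le> l \<Longrightarrow> d (\<sigma> j) (\<sigma> l) \<le> (1/2)^j"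
proof -
  obtain N where N: "\<And>j k l. N j \<le> k \<Longrightarrow> N j \<le> l \<Longrightarrow> d k l < (1/2)^j"
    using Cauchy[of "(1/2)^_"] by (metis zero_less_divide_1_iff zero_less_numeral zero_less_power)
  define \<sigma> where "\<sigma> j = (\<Sum>i\<le>j. N i) + j" for j
  have mono: "strict_mono \<sigma>"
    unfolding strict_mono_Suc_iff \<sigma>_def by simp
  have "N j \<le> \<sigma> j" for j
    unfolding \<sigma>_def using member_le_sum[of j "{..j}" N] by simp
  then have "d (\<sigma> j) (\<sigma> l) \<le> (1/2)^j" if "j \<le> l" for j l
    using N[of j "\<sigma> j" "\<sigma> l"] mono that by (meson less_imp_le order_trans strict_mono_less_eq)
  with mono that show thesis by blast
qed

lemma AE_convergent_if_geometric_L1_steps: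
  fixes g :: "nat \<Rightarrow> 'a \<Rightarrow> real"
  assumes [measurable]: "\<And>j. g j \<in> borel_measurable S" and gi: "\<And>j. integrable S (g j)"
    and steps: "\<And>j. (\<integral>x. \<bar>g (Suc j) x - g j x\<bar> \<partial>S) \<le> (1/2)^j"
  shows "AE x in S. convergent (\<lambda>j. g j x)"
proof -
  define u where "u j x = ennreal \<bar>g (Suc j) x - g j x\<bar>" for j x
  have [measurable]: "u j \<in> borel_measurable S" for j
    unfolding u_def by measurable
  have u: "(\<integral>\<^sup>+x. u j x \<partial>S) \<le> ennreal ((1/2)^j)" for j
    unfolding u_def using steps[of j]
    by (subst nn_integral_eq_integral) (auto intro!: integrable_abs Bochner_Integration.integrable_diff gi ennreal_leI)
  have "(\<integral>\<^sup>+x. (\<Sum>j. u j x) \<partial>S) \<le> (\<Sum>j. ennreal ((1/2)^j))"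
    by (subst nn_integral_suminf) (auto intro!: suminf_le u)
  also have "\<dots> = ennreal (\<Sum>j. (1/2)^j)"
    by (rule suminf_ennreal2) (auto intro: summable_geometric)
  finally have "AE x in S. (\<Sum>j. u j x) \<noteq> \<infinity>"
    by (intro nn_integral_noteq_infinite) (auto simp: u_def top_unique)
  then show ?thesis
  proof eventually_elim
    case (elim x)
    then have "summable (\<lambda>j. g (Suc j) x - g j x)"
      using summable_suminf_not_top[of "\<lambda>j. \<bar>g (Suc j) x - g j x\<bar>"] summable_rabs_cancel
      unfolding u_def by auto
    then have "(\<lambda>n. g 0 x + (\<Sum>j<n. g (Suc j) x - g j x)) \<longlonglongrightarrow> g 0 x + (\<Sum>j. g (Suc j) x - g j x)"
      by (intro tendsto_add tendsto_const summable_LIMSEQ)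
    then show ?case
      by (auto simp: convergent_def sum_lessThan_telescope[of "\<lambda>j. g j x"])
  qed
qed

lemma L1_geometric_Cauchy_limit:
  fixes g :: "nat \<Rightarrow> 'a \<Rightarrow> real"
  assumes g[measurable]: "\<And>j. g j \<in> borel_measurable S"
    and gn: "\<And>j x. x \<in> space S \<Longrightarrow> 0 \<le> g j x" and gi: "\<And>j. integrable S (g j)"
    and Cauchy: "\<And>j l. j \<le> l \<Longrightarrow> (\<integral>x. \<bar>g j x - g l x\<bar> \<partial>S) \<le> (1/2)^j"
  obtains F where "F \<in> borel_measurable S" "\<And>x. 0 \<le> F x" "integrable S F"
    "AE x in S. (\<lambda>j. g j x) \<longlonglongrightarrow> F x" "\<And>j. (\<integral>x. \<bar>g j x - F x\<bar> \<partial>S) \<le> (1/2)^j"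
proof
  define F where "F x = max 0 (lim (\<lambda>j. g j x))" for x
  show Fm[measurable]: "F \<in> borel_measurable S" unfolding F_def by measurable
  show Fn: "\<And>x. 0 \<le> F x" by (simp add: F_def)
  have "AE x in S. convergent (\<lambda>j. g j x)"
    using Cauchy[of _ "Suc _"] by (intro AE_convergent_if_geometric_L1_steps gi)
      (auto simp: abs_minus_commute)
  then show lim: "AE x in S. (\<lambda>j. g j x) \<longlonglongrightarrow> F x"
    using AE_space
  proof eventually_elim
    case (elim x)
    then have l: "(\<lambda>j. g j x) \<longlonglongrightarrow> lim (\<lambda>j. g j x)" by (simp add: convergent_LIMSEQ_iff)
    then have "0 \<le> lim (\<lambda>j. g j x)" by (rule LIMSEQ_le_const) (use elim gn in auto)
    then show ?case using l by (simp add: F_def)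
  qed
  \<comment> \<open>Fatou's lemma passes the Cauchy bound to the limit.\<close>
  have tail: "(\<integral>\<^sup>+x. ennreal \<bar>g j x - F x\<bar> \<partial>S) \<le> ennreal ((1/2)^j)" for j
  proof -
    have "(\<integral>\<^sup>+x. ennreal \<bar>g j x - F x\<bar> \<partial>S) = (\<integral>\<^sup>+x. liminf (\<lambda>l. ennreal \<bar>g j x - g l x\<bar>) \<partial>S)"
      using lim by (intro nn_integral_cong_AE) (auto elim!: AE_mp intro!: lim_imp_Liminf[symmetric]
          tendsto_ennrealI tendsto_intros)
    also have "\<dots> \<le> liminf (\<lambda>l. \<integral>\<^sup>+x. ennreal \<bar>g j x - g l x\<bar> \<partial>S)"
      by (rule nn_integral_liminf) simp
    also have "\<dots> \<le> liminf (\<lambda>l. ennreal ((1/2)^j))"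
    proof (rule Liminf_mono)
      have "(\<integral>\<^sup>+x. ennreal \<bar>g j x - g l x\<bar> \<partial>S) \<le> ennreal ((1/2)^j)" if "j \<le> l" for l
        using Cauchy[OF that] by (subst nn_integral_eq_integral)
          (auto intro!: integrable_abs Bochner_Integration.integrable_diff gi ennreal_leI)
      then show "\<forall>\<^sub>F l in sequentially. (\<integral>\<^sup>+x. ennreal \<bar>g j x - g l x\<bar> \<partial>S) \<le> ennreal ((1/2)^j)"
        unfolding eventually_sequentially by blast
    qed
    finally show ?thesis by (simp add: Liminf_const)
  qed
  have int: "integrable S (\<lambda>x. g j x - F x)" for j
    unfolding integrable_iff_bounded using tail[of j] by (auto intro: le_less_trans)
  then show "integrable S F"
    using Bochner_Integration.integrable_diff[OF gi[of 0] int[of 0]] by simp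
  show "(\<integral>x. \<bar>g j x - F x\<bar> \<partial>S) \<le> (1/2)^j" for j
    using tail[of j] int[of j] by (subst (asm) nn_integral_eq_integral) (auto simp: ennreal_le_iff)
qed

lemma density_mem_if_L1_limit:
  fixes f :: "nat \<Rightarrow> 'a \<Rightarrow> real"
  assumes sS: "sets S = sets Q" and vc: "variation_closed Q D"
    and fm[measurable]: "\<And>j. f j \<in> borel_measurable S" and fn: "\<And>j x. 0 \<le> f j x"
    and fi: "\<And>j. integrable S (f j)" "\<And>j. (\<integral>x. f j x \<partial>S) = 1"
    and fD: "\<And>j. density S (\<lambda>x. ennreal (f j x)) \<in> D"
    and Fm[measurable]: "F \<in> borel_measurable S" and Fn: "\<And>x. 0 \<le> F x" and Fi: "integrable S F"
    and lim: "(\<lambda>j. \<integral>x. \<bar>f j x - F x\<bar> \<partial>S) \<longlonglongrightarrow> 0"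
  shows "density S (\<lambda>x. ennreal (F x)) \<in> D"
proof -
  let ?R = "density S (\<lambda>x. ennreal (F x))"
  have "\<bar>(\<integral>x. F x \<partial>S) - 1\<bar> \<le> (\<integral>x. \<bar>f j x - F x\<bar> \<partial>S)" for j
  proof -
    have "\<bar>(\<integral>x. F x \<partial>S) - 1\<bar> = \<bar>\<integral>x. f j x - F x \<partial>S\<bar>"
      using fi[of j] Fi by simp
    then show ?thesis
      using integral_abs_bound by simp
  qed
  then have "\<bar>(\<integral>x. F x \<partial>S) - 1\<bar> \<le> 0"
    by (intro LIMSEQ_le_const[OF lim]) auto
  then have "emeasure ?R (space ?R) = 1"
    using Fi Fn by (simp add: emeasure_density nn_integral_eq_integral)
  then have "?R \<in> PMs Q"
    using sS by (simp add: PMs_def prob_spaceI)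
  moreover have "(\<lambda>j. tv_dist Q (density S (\<lambda>x. ennreal (f j x))) ?R) \<longlonglongrightarrow> 0"
  proof (rule tendsto_sandwich[OF _ _ tendsto_const lim])
    show "\<forall>\<^sub>F j in sequentially. 0 \<le> tv_dist Q (density S (\<lambda>x. ennreal (f j x))) ?R"
      using tv_dist_density_le(2)[OF sS fm _ Fm _ fi(1) Fi] fn Fn by auto
    show "\<forall>\<^sub>F j in sequentially. tv_dist Q (density S (\<lambda>x. ennreal (f j x))) ?R
        \<le> (\<integral>x. \<bar>f j x - F x\<bar> \<partial>S)"
      using tv_dist_density_le(1)[OF sS fm _ Fm _ fi(1) Fi] fn Fn by auto
  qed
  ultimately show ?thesis
    using vc[unfolded variation_closed_def, rule_format, of "\<lambda>j. density S (\<lambda>x. ennreal (f j x))"] fD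
    by blast
qed

section \<open>Existence of I-projections\<close>

lemma L1_dist_le_Idiv_excess:
  fixes f1 f2 :: "'a \<Rightarrow> real"
  assumes S: "finite_measure S" and sS: "sets S = sets Q" and cv: "convex_PMs Q D"
    and f1m[measurable]: "f1 \<in> borel_measurable S" and f2m[measurable]: "f2 \<in> borel_measurable S"
    and f1n: "\<And>x. 0 \<le> f1 x" and f2n: "\<And>x. 0 \<le> f2 x"
    and P1: "density S (\<lambda>x. ennreal (f1 x)) \<in> D" and P2: "density S (\<lambda>x. ennreal (f2 x)) \<in> D"
    and i1: "integrable S (\<lambda>x. xlx (f1 x))" and i2: "integrable S (\<lambda>x. xlx (f2 x))"
    and n1: "integrable S f1" "(\<integral>x. f1 x \<partial>S) = 1" and n2: "integrable S f2" "(\<integral>x. f2 x \<partial>S) = 1"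
    and low: "\<And>P. P \<in> D \<Longrightarrow> ereal c \<le> Idiv P S"
    and e: "0 < e"
  shows "(\<integral>x. \<bar>f1 x - f2 x\<bar> \<partial>S) \<le> e + (2 / e) * ((\<integral>x. xlx (f1 x) \<partial>S) + (\<integral>x. xlx (f2 x) \<partial>S) - 2 * c)"
proof -
  define m where "m x = (f1 x + f2 x) / 2" for x
  have m: "1/2 * f1 x + (1 - 1/2) * f2 x = m x" for x
    by (simp add: m_def)
  have mn: "0 \<le> m x" for x using f1n f2n by (simp add: m_def)
  have "mix Q (1/2) (density S (\<lambda>x. ennreal (f1 x))) (density S (\<lambda>x. ennreal (f2 x))) \<in> D"
    using cv P1 P2 unfolding convex_PMs_def by auto
  then have mD: "density S (\<lambda>x. ennreal (m x)) \<in> D"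
    using mix_density[OF sS f1m f2m f1n f2n, where a="1/2"] by (simp only: m)
  have im: "integrable S (\<lambda>x. xlx (m x))"
    using integrable_xlx_convex_comb[OF S f1m f2m f1n f2n _ _ i1 i2, where a="1/2"] by (simp only: m)
  have "ereal c \<le> Idiv (density S (\<lambda>x. ennreal (m x))) S" by (rule low[OF mD])
  then have cm: "c \<le> (\<integral>x. xlx (m x) \<partial>S)"
    using Idiv_density[OF S _ mn] im by (simp add: m_def)
  have "(\<integral>x. \<bar>f1 x - f2 x\<bar> \<partial>S) \<le> (\<integral>x. e * m x + (2 / e) * (xlx (f1 x) + xlx (f2 x) - 2 * xlx (m x)) \<partial>S)"
    using n1 n2 i1 i2 im abs_diff_le_xlx_midpoint_gap[OF f1n f2n e]
    by (intro integral_mono) (auto simp: m_def)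
  also have "\<dots> = e * (\<integral>x. m x \<partial>S) + (2 / e) * ((\<integral>x. xlx (f1 x) \<partial>S) + (\<integral>x. xlx (f2 x) \<partial>S) - 2 * (\<integral>x. xlx (m x) \<partial>S))"
    using n1 n2 i1 i2 im by (simp add: m_def)
  also have "\<dots> \<le> e + (2 / e) * ((\<integral>x. xlx (f1 x) \<partial>S) + (\<integral>x. xlx (f2 x) \<partial>S) - 2 * c)"
  proof -
    have intm: "(\<integral>x. m x \<partial>S) = 1" using n1 n2 by (simp add: m_def)
    show ?thesis unfolding intm using cm e by (intro add_mono mult_left_mono) auto
  qed
  finally show ?thesis .
qed

lemma integral_xlx_le_limit:
  fixes g :: "nat \<Rightarrow> 'a \<Rightarrow> real"
  assumes S: "finite_measure S"
    and [measurable]: "\<And>j. g j \<in> borel_measurable S" "F \<in> borel_measurable S"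
    and gn: "\<And>j x. 0 \<le> g j x" and Fn: "\<And>x. 0 \<le> F x"
    and gi: "\<And>j. integrable S (\<lambda>x. xlx (g j x))"
    and lim: "AE x in S. (\<lambda>j. g j x) \<longlonglongrightarrow> F x"
    and H: "(\<lambda>j. \<integral>x. xlx (g j x) \<partial>S) \<longlonglongrightarrow> c"
  shows "integrable S (\<lambda>x. xlx (F x))" "(\<integral>x. xlx (F x) \<partial>S) \<le> c"
proof -
  interpret finite_measure S by fact
  define \<mu> where "\<mu> = measure S (space S)"
  \<comment> \<open>Fatou's lemma applies since \<open>xlx\<close> is bounded below by \<open>-1\<close>.\<close>
  have "(\<integral>\<^sup>+x. ennreal (xlx (F x) + 1) \<partial>S) = (\<integral>\<^sup>+x. liminf (\<lambda>j. ennreal (xlx (g j x) + 1)) \<partial>S)"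
    using lim by (intro nn_integral_cong_AE) (auto elim!: AE_mp intro!: lim_imp_Liminf[symmetric]
        tendsto_ennrealI tendsto_intros isCont_tendsto_compose[OF isCont_xlx])
  also have "\<dots> \<le> liminf (\<lambda>j. \<integral>\<^sup>+x. ennreal (xlx (g j x) + 1) \<partial>S)"
    by (rule nn_integral_liminf) simp
  also have "\<dots> = liminf (\<lambda>j. ennreal ((\<integral>x. xlx (g j x) \<partial>S) + \<mu>))"
  proof -
    have "0 \<le> xlx (g j x) + 1" for j x
      using xlx_ge_minus_one[OF gn, of j x] by linarith
    then show ?thesis
      using gi by (subst nn_integral_eq_integral) (auto simp: \<mu>_def)
  qed
  also have "\<dots> = ennreal (c + \<mu>)"
    using H by (intro lim_imp_Liminf tendsto_ennrealI tendsto_intros) auto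
  finally have fatou: "(\<integral>\<^sup>+x. ennreal (xlx (F x) + 1) \<partial>S) \<le> ennreal (c + \<mu>)" .
  have F1: "0 \<le> xlx (F x) + 1" for x
    using xlx_ge_minus_one[OF Fn, of x] by linarith
  have i1: "integrable S (\<lambda>x. xlx (F x) + 1)"
    using fatou F1 by (intro integrableI_nonneg) (auto intro: le_less_trans)
  then show iF: "integrable S (\<lambda>x. xlx (F x))"
    using Bochner_Integration.integrable_diff[OF i1 integrable_const[of 1]] by simp
  have "0 \<le> (\<integral>x. xlx (F x) + 1 \<partial>S)"
    using F1 by (intro integral_nonneg_AE) auto
  moreover have "ennreal (\<integral>x. xlx (F x) + 1 \<partial>S) \<le> ennreal (c + \<mu>)"
    using fatou i1 F1 by (subst (asm) nn_integral_eq_integral) auto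
  moreover have "- \<mu> \<le> c"
  proof (rule LIMSEQ_le_const[OF H], intro exI allI impI)
    show "- \<mu> \<le> (\<integral>x. xlx (g j x) \<partial>S)" for j
      using gi integral_mono[of S "\<lambda>_. -1" "\<lambda>x. xlx (g j x)"] xlx_ge_minus_one[OF gn]
      by (simp add: \<mu>_def)
  qed
  ultimately have "(\<integral>x. xlx (F x) + 1 \<partial>S) \<le> c + \<mu>"
    by (simp add: ennreal_le_iff)
  then show "(\<integral>x. xlx (F x) \<partial>S) \<le> c"
    using iF by (simp add: \<mu>_def)
qed

lemma Idiv_INF_finite:
  assumes S: "finite_measure S" and sS: "sets S = sets Q" and D: "D \<subseteq> PMs Q"
    and ex: "\<exists>P\<in>D. Idiv P S < \<infinity>"
  obtains c where "(INF P\<in>D. Idiv P S) = ereal c"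
proof -
  have "- ereal (measure S (space S)) \<le> (INF P\<in>D. Idiv P S)"
    using Idiv_ge_minus_measure[OF S] D by (auto intro!: INF_greatest simp: PMs_def)
  moreover obtain P where "P \<in> D" "Idiv P S < \<infinity>"
    using ex by blast
  then have "(INF P\<in>D. Idiv P S) < \<infinity>"
    by (meson INF_lower le_less_trans)
  ultimately show thesis
    using that by (cases "INF P\<in>D. Idiv P S") auto
qed

lemma minimizing_densitiesE:
  assumes S: "finite_measure S" and D: "D \<subseteq> PMs Q" and sS: "sets S = sets Q"
    and c: "(INF P\<in>D. Idiv P S) = ereal c"
  obtains f :: "nat \<Rightarrow> 'a \<Rightarrow> real" where
    "\<And>k. f k \<in> borel_measurable S" "\<And>k x. 0 \<le> f k x" "\<And>k. density S (\<lambda>x. ennreal (f k x)) \<in> D"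
    "\<And>k. integrable S (f k)" "\<And>k. (\<integral>x. f k x \<partial>S) = 1" "\<And>k. integrable S (\<lambda>x. xlx (f k x))"
    "(\<lambda>k. \<integral>x. xlx (f k x) \<partial>S) \<longlonglongrightarrow> c"
proof -
  have "\<forall>k. \<exists>P. P \<in> D \<and> Idiv P S < ereal (c + 1 / Suc k)"
  proof
    fix k
    have "(INF P\<in>D. Idiv P S) < ereal (c + 1 / Suc k)" using c by simp
    then show "\<exists>P. P \<in> D \<and> Idiv P S < ereal (c + 1 / Suc k)" by (auto simp: INF_less_iff)
  qed
  then obtain P where PD: "\<And>k. P k \<in> D" and P: "\<And>k. Idiv (P k) S < ereal (c + 1 / Suc k)"
    by metis
  define f where "f k x = enn2real (RN_deriv S (P k) x)" for k x
  have fin: "prob_space (P k)" "Idiv (P k) S < \<infinity>" for k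
    using D PD[of k] P[of k] by (auto simp: PMs_def intro: less_le_trans)
  note f = Idiv_finite_RN_deriv[OF S fin, folded f_def]
  have "(\<lambda>k. \<integral>x. xlx (f k x) \<partial>S) \<longlonglongrightarrow> c"
  proof (rule tendsto_sandwich[of "\<lambda>_. c" _ _ "\<lambda>k. c + 1 / Suc k"])
    have "ereal c \<le> Idiv (P k) S" for k
      unfolding c[symmetric] using PD by (rule INF_lower)
    then show "\<forall>\<^sub>F k in sequentially. c \<le> (\<integral>x. xlx (f k x) \<partial>S)"
      by (simp add: f(5))
    show "\<forall>\<^sub>F k in sequentially. (\<integral>x. xlx (f k x) \<partial>S) \<le> c + 1 / Suc k"
      using P by (simp add: f(5) less_imp_le)
    show "(\<lambda>k. c + 1 / Suc k) \<longlonglongrightarrow> c"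
      using tendsto_add[OF tendsto_const LIMSEQ_Suc[OF lim_inverse_n']] by simp
  qed simp
  moreover have "density S (\<lambda>x. ennreal (f k x)) \<in> D" for k
    using PD f(1) by simp
  ultimately show thesis
    using f(2-4) by (intro that) (auto simp: f_def)
qed

lemma minimizing_densities_L1_Cauchy:
  fixes f :: "nat \<Rightarrow> 'a \<Rightarrow> real"
  assumes S: "finite_measure S" and sS: "sets S = sets Q" and cv: "convex_PMs Q D"
    and [measurable]: "\<And>k. f k \<in> borel_measurable S" and fn: "\<And>k x. 0 \<le> f k x"
    and fD: "\<And>k. density S (\<lambda>x. ennreal (f k x)) \<in> D"
    and fi: "\<And>k. integrable S (f k)" "\<And>k. (\<integral>x. f k x \<partial>S) = 1"
    and fxi: "\<And>k. integrable S (\<lambda>x. xlx (f k x))"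
    and low: "\<And>P. P \<in> D \<Longrightarrow> ereal c \<le> Idiv P S"
    and H: "(\<lambda>k. \<integral>x. xlx (f k x) \<partial>S) \<longlonglongrightarrow> c"
    and \<delta>: "0 < \<delta>"
  shows "\<exists>N. \<forall>k\<ge>N. \<forall>l\<ge>N. (\<integral>x. \<bar>f k x - f l x\<bar> \<partial>S) < \<delta>"
proof -
  have "\<forall>\<^sub>F k in sequentially. (\<integral>x. xlx (f k x) \<partial>S) < c + \<delta>\<^sup>2 / 16"
    using H \<delta> by (intro order_tendstoD) auto
  then obtain N where N: "\<And>k. N \<le> k \<Longrightarrow> (\<integral>x. xlx (f k x) \<partial>S) < c + \<delta>\<^sup>2 / 16"
    unfolding eventually_sequentially by blast
  have "(\<integral>x. \<bar>f k x - f l x\<bar> \<partial>S) < \<delta>" if "N \<le> k" "N \<le> l" for k l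
  proof -
    have "(\<integral>x. \<bar>f k x - f l x\<bar> \<partial>S)
        \<le> \<delta> / 2 + (2 / (\<delta> / 2)) * ((\<integral>x. xlx (f k x) \<partial>S) + (\<integral>x. xlx (f l x) \<partial>S) - 2 * c)"
      using \<delta> by (intro L1_dist_le_Idiv_excess[OF S sS cv _ _ fn fn fD fD fxi fxi fi fi low]) auto
    also have "\<dots> < \<delta> / 2 + (2 / (\<delta> / 2)) * (\<delta>\<^sup>2 / 8)"
      using N[OF that(1)] N[OF that(2)] \<delta> by (intro add_strict_left_mono mult_strict_left_mono) auto
    also have "\<dots> = \<delta>"
      using \<delta> by (simp add: field_simps power2_eq_square)
    finally show ?thesis .
  qed
  then show ?thesis by blast
qed

theorem is_Iproj_Iproj:
  assumes S: "finite_measure S" and sS: "sets S = sets Q"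
    and D: "D \<subseteq> PMs Q" and vc: "variation_closed Q D" and cv: "convex_PMs Q D"
    and ex: "\<exists>P\<in>D. Idiv P S < \<infinity>"
  shows "is_Iproj S D (Iproj S D)"
proof -
  obtain c where c: "(INF P\<in>D. Idiv P S) = ereal c"
    using Idiv_INF_finite[OF S sS D ex] .
  have low: "\<And>P. P \<in> D \<Longrightarrow> ereal c \<le> Idiv P S"
    unfolding c[symmetric] by (rule INF_lower)
  obtain f where fm[measurable]: "\<And>k. f k \<in> borel_measurable S" and fn: "\<And>k x. 0 \<le> f k x"
    and fD: "\<And>k. density S (\<lambda>x. ennreal (f k x)) \<in> D"
    and fi: "\<And>k. integrable S (f k)" "\<And>k. (\<integral>x. f k x \<partial>S) = 1"
    and fxi: "\<And>k. integrable S (\<lambda>x. xlx (f k x))"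
    and H: "(\<lambda>k. \<integral>x. xlx (f k x) \<partial>S) \<longlonglongrightarrow> c"
    using minimizing_densitiesE[OF S D sS c] by blast
  obtain \<sigma> where \<sigma>: "strict_mono \<sigma>"
    and Cauchy: "\<And>j l. j \<le> l \<Longrightarrow> (\<integral>x. \<bar>f (\<sigma> j) x - f (\<sigma> l) x\<bar> \<partial>S) \<le> (1/2)^j"
    using Cauchy_geometric_subseq[of "\<lambda>k l. \<integral>x. \<bar>f k x - f l x\<bar> \<partial>S"]
      minimizing_densities_L1_Cauchy[OF S sS cv fm fn fD fi fxi low H] by blast
  obtain F where Fm[measurable]: "F \<in> borel_measurable S" and Fn: "\<And>x. 0 \<le> F x"
    and Fi: "integrable S F" and Flim: "AE x in S. (\<lambda>j. f (\<sigma> j) x) \<longlonglongrightarrow> F x"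
    and Ftail: "\<And>j. (\<integral>x. \<bar>f (\<sigma> j) x - F x\<bar> \<partial>S) \<le> (1/2)^j"
    using L1_geometric_Cauchy_limit[of "\<lambda>j. f (\<sigma> j)", OF fm fn fi(1) Cauchy] by blast
  define R where "R = density S (\<lambda>x. ennreal (F x))"
  have "(\<lambda>j. \<integral>x. \<bar>f (\<sigma> j) x - F x\<bar> \<partial>S) \<longlonglongrightarrow> 0"
  proof (rule tendsto_sandwich[OF _ _ tendsto_const LIMSEQ_realpow_zero[of "1/2"]])
    show "\<forall>\<^sub>F j in sequentially. 0 \<le> (\<integral>x. \<bar>f (\<sigma> j) x - F x\<bar> \<partial>S)"
      by (simp add: integral_nonneg_AE)
    show "\<forall>\<^sub>F j in sequentially. (\<integral>x. \<bar>f (\<sigma> j) x - F x\<bar> \<partial>S) \<le> (1/2)^j"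
      using Ftail by simp
  qed simp_all
  then have RD: "R \<in> D"
    unfolding R_def by (rule density_mem_if_L1_limit[where f="\<lambda>j. f (\<sigma> j)", OF sS vc fm fn fi fD Fm Fn Fi])
  have "integrable S (\<lambda>x. xlx (F x))" "(\<integral>x. xlx (F x) \<partial>S) \<le> c"
    using integral_xlx_le_limit[of S "\<lambda>j. f (\<sigma> j)" F c] fm fn fxi Fn Flim
      LIMSEQ_subseq_LIMSEQ[OF H \<sigma>, unfolded comp_def] by (simp_all add: S)
  then have "Idiv R S \<le> ereal c"
    unfolding R_def using Idiv_density[OF S Fm Fn] by simp
  then have "is_Iproj S D R"
    using low[OF RD] c RD by (simp add: is_Iproj_def)
  then show ?thesis
    unfolding Iproj_def by (rule someI)
qed

lemma Iproj_integral_xlx_le_mix: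
  assumes S: "finite_measure S" and sS: "sets S = sets Q"
    and D: "D \<subseteq> PMs Q" and cv: "convex_PMs Q D"
    and R: "is_Iproj S D R" and V: "V \<in> D" and Vf: "Idiv V S < \<infinity>"
    and a: "0 \<le> a" "a \<le> 1"
  defines "r \<equiv> \<lambda>x. enn2real (RN_deriv S R x)" and "v \<equiv> \<lambda>x. enn2real (RN_deriv S V x)"
  shows "integrable S (\<lambda>x. xlx (a * v x + (1 - a) * r x))"
    and "(\<integral>x. xlx (r x) \<partial>S) \<le> (\<integral>x. xlx (a * v x + (1 - a) * r x) \<partial>S)"
proof -
  have RD: "R \<in> D" and Rf: "Idiv R S < \<infinity>"
    and Rmin: "\<And>P. P \<in> D \<Longrightarrow> Idiv R S \<le> Idiv P S"
    using R unfolding is_Iproj_def by (auto intro: INF_lower)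
  have prob: "\<And>P. P \<in> D \<Longrightarrow> prob_space P" using D by (auto simp: PMs_def)
  have "enn2real (RN_deriv S R x) = r x" "enn2real (RN_deriv S V x) = v x" for x
    by (simp_all add: r_def v_def)
  note r = Idiv_finite_RN_deriv[OF S prob[OF RD] Rf, unfolded this]
    and v = Idiv_finite_RN_deriv[OF S prob[OF V] Vf, unfolded this]
  have rm[measurable]: "r \<in> borel_measurable S" and vm[measurable]: "v \<in> borel_measurable S"
    and rn: "\<And>x. 0 \<le> r x" and vn: "\<And>x. 0 \<le> v x"
    unfolding r_def v_def by simp_all
  show im: "integrable S (\<lambda>x. xlx (a * v x + (1 - a) * r x))"
    by (rule integrable_xlx_convex_comb[OF S vm rm vn rn a v(4) r(4)])
  have "mix Q a V R \<in> D"
    using cv V RD a unfolding convex_PMs_def by auto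
  then have "Idiv R S \<le> Idiv (density S (\<lambda>x. ennreal (a * v x + (1 - a) * r x))) S"
    using Rmin mix_density[OF sS vm rm vn rn a] v(1) r(1) by simp
  then show "(\<integral>x. xlx (r x) \<partial>S) \<le> (\<integral>x. xlx (a * v x + (1 - a) * r x) \<partial>S)"
    using Idiv_density[OF S, of "\<lambda>x. a * v x + (1 - a) * r x"] im r(5) rn vn a by simp
qed

\<comment> \<open>The integrand is \<open>v ln (v / r) - v + r\<close>, so this is \<open>I(V|R) \<le> I(V|S) - I(R|S)\<close>.\<close>
lemma Iproj_Pythagorean_ineq:
  assumes S: "finite_measure S" and sS: "sets S = sets Q"
    and D: "D \<subseteq> PMs Q" and cv: "convex_PMs Q D"
    and R: "is_Iproj S D R" and V: "V \<in> D" and Vf: "Idiv V S < \<infinity>"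
  defines "r \<equiv> \<lambda>x. enn2real (RN_deriv S R x)" and "v \<equiv> \<lambda>x. enn2real (RN_deriv S V x)"
  shows "(\<integral>\<^sup>+x. (if 0 < r x then ennreal (v x * ln (v x) - v x * ln (r x) - v x + r x)
      else if 0 < v x then \<infinity> else 0) \<partial>S) \<le> ennreal ((\<integral>x. xlx (v x) \<partial>S) - (\<integral>x. xlx (r x) \<partial>S))"
proof -
  have prob: "\<And>P. P \<in> D \<Longrightarrow> prob_space P" using D by (auto simp: PMs_def)
  have xlx_r: "integrable S (\<lambda>x. xlx (r x))" and xlx_v: "integrable S (\<lambda>x. xlx (v x))"
    unfolding r_def v_def using R V Vf prob
    by (auto intro!: Idiv_finite_RN_deriv(4)[OF S] simp: is_Iproj_def)
  have [measurable]: "r \<in> borel_measurable S" "v \<in> borel_measurable S"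
    and rn: "\<And>x. 0 \<le> r x" and vn: "\<And>x. 0 \<le> v x"
    unfolding r_def v_def by simp_all
  define a where "a k = 1 / real (Suc (Suc k))" for k
  have a: "0 < a k" "a k < 1" for k by (auto simp: a_def)
  have a0: "a \<longlonglongrightarrow> 0"
    unfolding a_def using LIMSEQ_Suc[OF LIMSEQ_Suc[OF lim_inverse_n']] by simp
  have "enn2real (RN_deriv S R x) = r x" "enn2real (RN_deriv S V x) = v x" for x
    by (simp_all add: r_def v_def)
  note mix = Iproj_integral_xlx_le_mix[OF S sS D cv R V Vf less_imp_le[OF a(1)] less_imp_le[OF a(2)],
      unfolded this]
  define B where "B k x = (xlx (v x) - xlx (r x)) - (xlx (a k * v x + (1 - a k) * r x) - xlx (r x)) / a k"
    for k x
  have [measurable]: "B k \<in> borel_measurable S" for k unfolding B_def by measurable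
  have Bn: "0 \<le> B k x" for k x
    using xlx_secant_le[OF rn vn a(1) less_imp_le[OF a(2)]] by (simp add: B_def)
  have intB: "(\<integral>\<^sup>+x. ennreal (B k x) \<partial>S) \<le> ennreal ((\<integral>x. xlx (v x) \<partial>S) - (\<integral>x. xlx (r x) \<partial>S))" for k
  proof -
    have "(\<integral>\<^sup>+x. ennreal (B k x) \<partial>S) = ennreal (\<integral>x. B k x \<partial>S)"
      using xlx_r xlx_v mix(1) Bn by (intro nn_integral_eq_integral) (auto simp: B_def)
    moreover have "(\<integral>x. B k x \<partial>S) \<le> (\<integral>x. xlx (v x) \<partial>S) - (\<integral>x. xlx (r x) \<partial>S)"
      using xlx_r xlx_v mix[of k] a[of k] by (simp add: B_def divide_nonneg_pos)
    ultimately show ?thesis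
      by (simp add: ennreal_leI)
  qed
  have "(\<integral>\<^sup>+x. (if 0 < r x then ennreal (v x * ln (v x) - v x * ln (r x) - v x + r x)
      else if 0 < v x then \<infinity> else 0) \<partial>S) \<le> (\<integral>\<^sup>+x. liminf (\<lambda>k. ennreal (B k x)) \<partial>S)"
    using xlx_secant_liminf[OF rn vn a a0] by (intro nn_integral_mono) (simp add: B_def)
  also have "\<dots> \<le> liminf (\<lambda>k. \<integral>\<^sup>+x. ennreal (B k x) \<partial>S)"
    by (rule nn_integral_liminf) simp
  also have "\<dots> \<le> liminf (\<lambda>k. ennreal ((\<integral>x. xlx (v x) \<partial>S) - (\<integral>x. xlx (r x) \<partial>S)))"
    using intB by (intro Liminf_mono always_eventually allI)
  finally show ?thesis
    by (simp add: Liminf_const)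
qed

lemma Idiv_Iproj_finite:
  assumes S: "finite_measure S" and sS: "sets S = sets Q"
    and D: "D \<subseteq> PMs Q" and cv: "convex_PMs Q D"
    and R: "is_Iproj S D R" and V: "V \<in> D" and Vf: "Idiv V S < \<infinity>"
  shows "Idiv V R < \<infinity>"
proof -
  define r where "r x = enn2real (RN_deriv S R x)" for x
  define v where "v x = enn2real (RN_deriv S V x)" for x
  have [measurable]: "r \<in> borel_measurable S" "v \<in> borel_measurable S"
    and rn: "\<And>x. 0 \<le> r x" and vn: "\<And>x. 0 \<le> v x"
    unfolding r_def v_def by simp_all
  have prob: "\<And>P. P \<in> D \<Longrightarrow> prob_space P" using D by (auto simp: PMs_def)
  have RD: "R \<in> D" and Rf: "Idiv R S < \<infinity>" using R by (auto simp: is_Iproj_def)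
  note r = Idiv_finite_RN_deriv[OF S prob[OF RD] Rf, folded r_def]
  note v = Idiv_finite_RN_deriv[OF S prob[OF V] Vf, folded v_def]
  define Bf where "Bf x = (if 0 < r x then ennreal (v x * ln (v x) - v x * ln (r x) - v x + r x)
      else if 0 < v x then \<infinity> else 0)" for x
  define Br where "Br x = (if 0 < r x then v x * ln (v x) - v x * ln (r x) - v x + r x else 0)" for x
  have [measurable]: "Bf \<in> borel_measurable S" "Br \<in> borel_measurable S"
    unfolding Bf_def Br_def by measurable
  have "(\<integral>\<^sup>+x. Bf x \<partial>S) \<le> ennreal ((\<integral>x. xlx (v x) \<partial>S) - (\<integral>x. xlx (r x) \<partial>S))"
    using Iproj_Pythagorean_ineq[OF S sS D cv R V Vf, folded r_def v_def] unfolding Bf_def .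
  then have Bf_fin: "(\<integral>\<^sup>+x. Bf x \<partial>S) < \<infinity>"
    by (rule le_less_trans) simp
  then have "AE x in S. Bf x \<noteq> \<infinity>"
    by (intro nn_integral_noteq_infinite) simp_all
  then have ac: "AE x in S. r x = 0 \<longrightarrow> v x = 0"
  proof eventually_elim
    case (elim x)
    then show ?case using vn[of x] by (auto simp: Bf_def split: if_splits)
  qed
  have Br_nonneg: "0 \<le> Br x" for x
  proof (cases "0 < r x")
    case True
    then show ?thesis
      using xlx_tangent_le[OF True vn[of x]] by (simp add: Br_def xlx_def algebra_simps)
  qed (simp add: Br_def)
  have "(\<integral>\<^sup>+x. ennreal (Br x) \<partial>S) \<le> (\<integral>\<^sup>+x. Bf x \<partial>S)"
    by (intro nn_integral_mono) (simp add: Br_def Bf_def)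
  then have "integrable S Br"
    using Bf_fin Br_nonneg by (intro integrableI_nonneg AE_I2) (simp_all add: le_less_trans)
  then show ?thesis
    using Idiv_density_finite_if_integrable_log_ratio[OF prob[OF RD] r(1) v(1) _ _ rn vn r(2) v(2) ac]
    by (simp add: Br_def[abs_def])
qed

section \<open>Divergences from measures with \<open>Q\<close>-densities\<close>

lemma AE_density_finite:
  assumes "sigma_finite_measure Q" and [measurable]: "\<mu> \<in> borel_measurable Q"
    and "finite_measure (density Q \<mu>)"
  shows "AE x in Q. \<mu> x \<noteq> \<infinity>"
proof -
  interpret sigma_finite_measure Q by fact
  show ?thesis
    using assms(3) sigma_finite_iff_density_finite[of \<mu>] finite_measure.sigma_finite_measure by auto
qed

lemma density_eq_density_quotient:
  fixes v :: "'a \<Rightarrow> real" and \<mu> :: "'a \<Rightarrow> ennreal"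
  assumes [measurable]: "v \<in> borel_measurable Q" "\<mu> \<in> borel_measurable Q" and vn: "\<And>x. 0 \<le> v x"
    and fin: "AE x in Q. \<mu> x \<noteq> \<infinity>" and pos: "AE x in Q. 0 < v x \<longrightarrow> 0 < \<mu> x"
  shows "density Q (\<lambda>x. ennreal (v x)) = density (density Q \<mu>)
    (\<lambda>x. ennreal (if 0 < \<mu> x \<and> \<mu> x < \<infinity> then v x / enn2real (\<mu> x) else 0))"
proof -
  have "AE x in Q. \<mu> x * ennreal (if 0 < \<mu> x \<and> \<mu> x < \<infinity> then v x / enn2real (\<mu> x) else 0) = ennreal (v x)"
    using fin pos
  proof eventually_elim
    case (elim x)
    show ?case
    proof (cases "0 < \<mu> x")
      case True
      with elim(1) obtain m where "0 < m" "\<mu> x = ennreal m" by (cases "\<mu> x") auto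
      then show ?thesis by (simp add: ennreal_mult'[symmetric])
    next
      case False
      then show ?thesis using elim(2) vn[of x] by (simp add: le_less)
    qed
  qed
  then show ?thesis
    by (subst density_density_eq) (auto intro!: density_cong)
qed

lemma Idiv_density_finite_imp_AE_pos:
  assumes [measurable]: "\<mu> \<in> borel_measurable Q" and X: "finite_measure (density Q \<mu>)"
    and V: "prob_space V" and fin: "Idiv V (density Q \<mu>) < \<infinity>"
  shows "AE x in V. 0 < \<mu> x"
proof -
  have "sets V = sets (density Q \<mu>)" "absolutely_continuous (density Q \<mu>) V"
    using Idiv_finite_imp_density[OF X V fin] by simp_all
  moreover have "AE x in density Q \<mu>. 0 < \<mu> x"
    by (simp add: AE_density)
  ultimately show ?thesis
    by (rule absolutely_continuous_AE)
qed

lemma Idiv_density_finite_iff_log_ratio: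
  fixes v :: "'a \<Rightarrow> real" and \<mu> :: "'a \<Rightarrow> ennreal"
  assumes Q: "sigma_finite_measure Q"
    and vm[measurable]: "v \<in> borel_measurable Q" and vn: "\<And>x. 0 \<le> v x"
    and V: "prob_space (density Q (\<lambda>x. ennreal (v x)))"
    and \<mu>m[measurable]: "\<mu> \<in> borel_measurable Q" and X: "finite_measure (density Q \<mu>)"
  shows "Idiv (density Q (\<lambda>x. ennreal (v x))) (density Q \<mu>) < \<infinity> \<longleftrightarrow>
     (AE x in density Q (\<lambda>x. ennreal (v x)). 0 < \<mu> x) \<and>
     integrable (density Q (\<lambda>x. ennreal (v x))) (\<lambda>x. ln (v x) - ln (enn2real (\<mu> x)))"
    (is "Idiv ?V ?X < \<infinity> \<longleftrightarrow> ?pos \<and> ?int")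
proof -
  have fin: "AE x in Q. \<mu> x \<noteq> \<infinity>" by (rule AE_density_finite[OF Q _ X]) simp
  have "Idiv ?V ?X < \<infinity> \<longleftrightarrow> ?int" if pos: ?pos
  proof -
    define w where "w x = (if 0 < \<mu> x \<and> \<mu> x < \<infinity> then v x / enn2real (\<mu> x) else 0)" for x
    have [measurable]: "w \<in> borel_measurable ?X" unfolding w_def by measurable
    have wn: "\<And>x. 0 \<le> w x" unfolding w_def using vn by simp
    have "AE x in Q. 0 < v x \<longrightarrow> 0 < \<mu> x" using pos by (simp add: AE_density)
    then have VX: "?V = density ?X (\<lambda>x. ennreal (w x))"
      unfolding w_def by (rule density_eq_density_quotient[OF vm \<mu>m vn fin])
    have "AE x in ?V. 0 < v x \<and> \<mu> x \<noteq> \<infinity>"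
      using fin by (subst AE_density) (auto elim!: AE_mp)
    then have "AE x in ?V. ln (w x) = ln (v x) - ln (enn2real (\<mu> x))"
      using pos
    proof eventually_elim
      case (elim x)
      then obtain m where "0 < m" "\<mu> x = ennreal m" by (cases "\<mu> x") auto
      then show ?case using elim by (simp add: w_def ln_div)
    qed
    then have "integrable ?V (\<lambda>x. ln (w x)) \<longleftrightarrow> ?int"
      by (intro integrable_cong_AE) auto
    then show ?thesis
      using Idiv_density_finite_iff[OF X, of w] integrable_xlx_iff_integrable_ln_density[of w ?X] wn VX
      by simp
  qed
  then show ?thesis
    using Idiv_density_finite_imp_AE_pos[OF _ X V] by auto
qed

\<comment> \<open>\<open>ln (v / (\<alpha> / \<beta>)) = ln (v / \<alpha>) + ln (v / \<sigma>) - ln (v / (\<sigma> \<beta>))\<close>\<close>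
lemma Idiv_density_quotient_finite:
  fixes v :: "'a \<Rightarrow> real" and \<alpha> \<sigma> \<beta> :: "'a \<Rightarrow> ennreal"
  assumes Q: "sigma_finite_measure Q"
    and vm[measurable]: "v \<in> borel_measurable Q" and vn: "\<And>x. 0 \<le> v x"
    and V: "prob_space (density Q (\<lambda>x. ennreal (v x)))"
    and [measurable]: "\<alpha> \<in> borel_measurable Q" "\<sigma> \<in> borel_measurable Q" "\<beta> \<in> borel_measurable Q"
    and fin: "finite_measure (density Q \<alpha>)" "finite_measure (density Q \<sigma>)"
      "finite_measure (density Q (\<lambda>x. \<sigma> x * \<beta> x))" "finite_measure (density Q (\<lambda>x. \<alpha> x * inverse (\<beta> x)))"
    and I: "Idiv (density Q (\<lambda>x. ennreal (v x))) (density Q \<alpha>) < \<infinity>"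
      "Idiv (density Q (\<lambda>x. ennreal (v x))) (density Q \<sigma>) < \<infinity>"
      "Idiv (density Q (\<lambda>x. ennreal (v x))) (density Q (\<lambda>x. \<sigma> x * \<beta> x)) < \<infinity>"
  shows "Idiv (density Q (\<lambda>x. ennreal (v x))) (density Q (\<lambda>x. \<alpha> x * inverse (\<beta> x))) < \<infinity>"
proof -
  let ?V = "density Q (\<lambda>x. ennreal (v x))"
  note iff = Idiv_density_finite_iff_log_ratio[OF Q vm vn V]
  have A: "AE x in ?V. 0 < \<alpha> x" "integrable ?V (\<lambda>x. ln (v x) - ln (enn2real (\<alpha> x)))"
    using iff[OF _ fin(1)] I(1) by simp_all
  have S: "AE x in ?V. 0 < \<sigma> x" "integrable ?V (\<lambda>x. ln (v x) - ln (enn2real (\<sigma> x)))"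
    using iff[OF _ fin(2)] I(2) by simp_all
  have P: "AE x in ?V. 0 < \<sigma> x * \<beta> x" "integrable ?V (\<lambda>x. ln (v x) - ln (enn2real (\<sigma> x * \<beta> x)))"
    using iff[OF _ fin(3)] I(3) by simp_all
  have "AE x in Q. \<alpha> x \<noteq> \<infinity> \<and> \<sigma> x * \<beta> x \<noteq> \<infinity>"
    using AE_density_finite[OF Q _ fin(1)] AE_density_finite[OF Q _ fin(3)] by auto
  then have "AE x in ?V. \<alpha> x \<noteq> \<infinity> \<and> \<sigma> x * \<beta> x \<noteq> \<infinity>"
    by (subst AE_density) (auto elim!: AE_mp)
  then have ae: "AE x in ?V. 0 < \<alpha> x * inverse (\<beta> x) \<and>
     ln (v x) - ln (enn2real (\<alpha> x * inverse (\<beta> x))) =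
     (ln (v x) - ln (enn2real (\<alpha> x))) + (ln (v x) - ln (enn2real (\<sigma> x)))
       - (ln (v x) - ln (enn2real (\<sigma> x * \<beta> x)))"
    using A(1) S(1) P(1)
  proof eventually_elim
    case (elim x)
    then obtain a s where as: "0 < a" "\<alpha> x = ennreal a" "0 < s" "\<sigma> x = ennreal s"
      by (cases "\<alpha> x"; cases "\<sigma> x") (auto simp: ennreal_mult_eq_top_iff)
    with elim obtain b where b: "0 < b" "\<beta> x = ennreal b"
      by (cases "\<beta> x") (auto simp: ennreal_mult_eq_top_iff ennreal_mult'[symmetric] zero_less_mult_iff)
    have "\<alpha> x * inverse (\<beta> x) = ennreal (a / b)" "\<sigma> x * \<beta> x = ennreal (s * b)"
      using as b by (simp_all add: inverse_ennreal ennreal_mult'[symmetric] divide_inverse)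
    then show ?case
      using as b by (simp add: ln_div ln_mult)
  qed
  have "integrable ?V (\<lambda>x. (ln (v x) - ln (enn2real (\<alpha> x))) + (ln (v x) - ln (enn2real (\<sigma> x)))
      - (ln (v x) - ln (enn2real (\<sigma> x * \<beta> x))))"
    by (intro Bochner_Integration.integrable_add Bochner_Integration.integrable_diff A(2) S(2) P(2))
  then have "integrable ?V (\<lambda>x. ln (v x) - ln (enn2real (\<alpha> x * inverse (\<beta> x))))"
    by (rule integrable_cong_AE_imp) (use ae in \<open>auto elim: AE_mp\<close>)
  moreover have "AE x in ?V. 0 < \<alpha> x * inverse (\<beta> x)"
    using ae by (auto elim: AE_mp)
  ultimately show ?thesis
    using iff[OF _ fin(4)] by simp
qed

section \<open>The iterative algorithm\<close>

\<comment> \<open>\<open>S\<close> and \<open>P\<close> stand for \<open>S_{n,i}\<close> and \<open>P_{n,i}\<close>, and \<open>V\<close> for a common point of the \<open>C\<^sub>i\<close> with \<open>I(V|Q) < \<infinity>\<close>.\<close>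
definition alg_invariant :: "'a measure \<Rightarrow> 'a measure \<Rightarrow> 'a measure \<Rightarrow> 'a measure \<Rightarrow> bool" where
  "alg_invariant Q V S P \<longleftrightarrow> (\<exists>\<sigma>\<in>borel_measurable Q. S = density Q \<sigma>) \<and> finite_measure S \<and>
     P \<in> PMs Q \<and> P = density Q (RN_deriv Q P) \<and> P = density S (RN_deriv S P) \<and>
     Idiv V S < \<infinity> \<and> Idiv V P < \<infinity>"

lemma alg_invariant_start:
  assumes Q: "prob_space Q" and IVQ: "Idiv V Q < \<infinity>"
  shows "alg_invariant Q V Q Q"
proof -
  interpret prob_space Q by fact
  have "Q = density Q (RN_deriv Q Q)"
    using density_RN_deriv[of Q] by (simp add: absolutely_continuous_def)
  moreover have "(\<lambda>_. 1) \<in> borel_measurable Q" "Q = density Q (\<lambda>_. 1)"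
    by (simp_all add: density_1)
  ultimately show ?thesis
    unfolding alg_invariant_def PMs_def using Q IVQ finite_measure_axioms by blast
qed

lemma Idiv_finite_update:
  assumes Q: "prob_space Q" and V: "prob_space V" and IVQ: "Idiv V Q < \<infinity>"
    and old: "alg_invariant Q V So Po" and prev: "alg_invariant Q V Sp Pp"
    and S': "S' = density Q (\<lambda>x. RN_deriv Q Pp x * inverse (RN_deriv So Po x))"
    and fin: "finite_measure S'"
  shows "Idiv V S' < \<infinity>"
proof -
  interpret prob_space Q by fact
  define v where "v x = enn2real (RN_deriv Q V x)" for x
  have [measurable]: "v \<in> borel_measurable Q" and vn: "\<And>x. 0 \<le> v x"
    unfolding v_def by simp_all
  have Vv: "V = density Q (\<lambda>x. ennreal (v x))"
    unfolding v_def by (rule Idiv_finite_imp_density(3)[OF finite_measure_axioms V IVQ])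
  from old obtain \<sigma> where [measurable]: "\<sigma> \<in> borel_measurable Q" and So: "So = density Q \<sigma>"
    and Sof: "finite_measure So" and Po: "Po \<in> PMs Q" "Po = density So (RN_deriv So Po)"
    and ISo: "Idiv V So < \<infinity>" and IPo: "Idiv V Po < \<infinity>"
    unfolding alg_invariant_def by blast
  from prev have Pp: "Pp \<in> PMs Q" "Pp = density Q (RN_deriv Q Pp)" and IPp: "Idiv V Pp < \<infinity>"
    unfolding alg_invariant_def by blast+
  define \<alpha> where "\<alpha> = RN_deriv Q Pp"
  define \<beta> where "\<beta> = RN_deriv So Po"
  have [measurable]: "\<alpha> \<in> borel_measurable Q" "\<beta> \<in> borel_measurable Q"
    unfolding \<alpha>_def \<beta>_def using borel_measurable_RN_deriv[of So Po] So by simp_all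
  have Po_Q: "Po = density Q (\<lambda>x. \<sigma> x * \<beta> x)"
    using Po(2) So by (simp add: \<beta>_def density_density_eq)
  have prob_fin: "finite_measure P" if "P \<in> PMs Q" for P
    using that by (simp add: PMs_def prob_space_def)
  have "Idiv (density Q (\<lambda>x. ennreal (v x))) (density Q (\<lambda>x. \<alpha> x * inverse (\<beta> x))) < \<infinity>"
  proof (rule Idiv_density_quotient_finite[OF sigma_finite_measure_axioms _ vn])
    show "prob_space (density Q (\<lambda>x. ennreal (v x)))" using V Vv by simp
    show "finite_measure (density Q \<alpha>)" using prob_fin[OF Pp(1)] Pp(2) by (simp add: \<alpha>_def)
    show "finite_measure (density Q \<sigma>)" using Sof So by simp
    show "finite_measure (density Q (\<lambda>x. \<sigma> x * \<beta> x))" using prob_fin[OF Po(1)] Po_Q by simp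
    show "finite_measure (density Q (\<lambda>x. \<alpha> x * inverse (\<beta> x)))"
      using fin S' by (simp add: \<alpha>_def \<beta>_def)
    show "Idiv (density Q (\<lambda>x. ennreal (v x))) (density Q \<alpha>) < \<infinity>"
      using IPp Pp(2) Vv by (simp add: \<alpha>_def)
    show "Idiv (density Q (\<lambda>x. ennreal (v x))) (density Q \<sigma>) < \<infinity>"
      using ISo So Vv by simp
    show "Idiv (density Q (\<lambda>x. ennreal (v x))) (density Q (\<lambda>x. \<sigma> x * \<beta> x)) < \<infinity>"
      using IPo Po_Q Vv by simp
  qed simp_all
  then show ?thesis
    using S' Vv by (simp add: \<alpha>_def \<beta>_def)
qed

lemma alg_invariant_Iproj:
  assumes Q: "prob_space Q" and \<sigma>[measurable]: "\<sigma> \<in> borel_measurable Q" and S: "S = density Q \<sigma>"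
    and Sf: "finite_measure S"
    and D: "D \<subseteq> PMs Q" and vc: "variation_closed Q D" and cv: "convex_PMs Q D"
    and VD: "V \<in> D" and IVS: "Idiv V S < \<infinity>"
  shows "is_Iproj S D (Iproj S D) \<and> alg_invariant Q V S (Iproj S D)"
proof -
  interpret prob_space Q by fact
  have sS: "sets S = sets Q" using S by simp
  have isI: "is_Iproj S D (Iproj S D)"
    using is_Iproj_Iproj[OF Sf sS D vc cv] VD IVS by blast
  define P where "P = Iproj S D"
  have PD: "P \<in> D" and IPS: "Idiv P S < \<infinity>"
    using isI unfolding is_Iproj_def P_def by blast+
  then have P: "P \<in> PMs Q" using D by blast
  then have Pp: "prob_space P" and sP: "sets P = sets Q" by (simp_all add: PMs_def)
  have acS: "absolutely_continuous S P"
    using Idiv_finite_imp_density(2)[OF Sf Pp IPS] .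
  moreover have "absolutely_continuous Q S"
    unfolding S by (rule absolutely_continuousI_density) simp
  ultimately have acQ: "absolutely_continuous Q P"
    unfolding absolutely_continuous_def by blast
  have "P = density S (RN_deriv S P)"
  proof -
    interpret S: finite_measure S by fact
    show ?thesis using S.density_RN_deriv[OF acS] sP sS by simp
  qed
  moreover have "P = density Q (RN_deriv Q P)"
    using density_RN_deriv[OF acQ sP] by simp
  moreover have "Idiv V P < \<infinity>"
    unfolding P_def by (rule Idiv_Iproj_finite[OF Sf sS D cv isI VD IVS])
  ultimately show ?thesis
    using isI \<sigma> S Sf P IVS unfolding alg_invariant_def P_def by blast
qed

lemma algS_algP_simps:
  "algS Q C t 0 i = Q" "algP Q C t 0 i = Q"
  "algS Q C t (Suc m) (Suc 0) = density Q (\<lambda>x. RN_deriv Q (algP Q C t m t) x *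
      inverse (RN_deriv (algS Q C t m (Suc 0)) (algP Q C t m (Suc 0)) x))"
  "algP Q C t (Suc m) (Suc 0) = Iproj (algS Q C t (Suc m) (Suc 0)) (C (Suc 0))"
  "algS Q C t (Suc m) (Suc (Suc j)) = density Q (\<lambda>x. RN_deriv Q (algP Q C t (Suc m) (Suc j)) x *
      inverse (RN_deriv (algS Q C t m (Suc (Suc j))) (algP Q C t m (Suc (Suc j))) x))"
  "algP Q C t (Suc m) (Suc (Suc j)) = Iproj (algS Q C t (Suc m) (Suc (Suc j))) (C (Suc (Suc j)))"
  by (simp_all add: algS_def algP_def Let_def)

lemma alg_invariant_step:
  assumes Q: "prob_space Q" and V: "prob_space V" and IVQ: "Idiv V Q < \<infinity>"
    and old: "alg_invariant Q V So Po" and prev: "alg_invariant Q V Sp Pp"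
    and S: "S = density Q (\<lambda>x. RN_deriv Q Pp x * inverse (RN_deriv So Po x))"
    and fin: "emeasure S (space Q) < \<infinity>"
    and D: "D \<subseteq> PMs Q" and vc: "variation_closed Q D" and cv: "convex_PMs Q D" and VD: "V \<in> D"
  shows "is_Iproj S D (Iproj S D) \<and> alg_invariant Q V S (Iproj S D)"
proof -
  have sS: "sets S = sets Q" using S by simp
  have Sf: "finite_measure S"
    using fin sets_eq_imp_space_eq[OF sS] by (intro finite_measureI) simp
  have [measurable]: "RN_deriv So Po \<in> borel_measurable Q"
    using old borel_measurable_RN_deriv[of So Po] unfolding alg_invariant_def by auto
  show ?thesis
    by (rule alg_invariant_Iproj[OF Q _ S Sf D vc cv VD Idiv_finite_update[OF Q V IVQ old prev S Sf]])
      simp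
qed

lemma alg_invariant_algS_algP:
  assumes Q: "prob_space Q" and t: "t \<ge> 1"
    and C: "\<And>i. i \<in> {1..t} \<Longrightarrow> C i \<subseteq> PMs Q \<and> variation_closed Q (C i) \<and> convex_PMs Q (C i)"
    and fin: "\<And>n i. i \<in> {1..t} \<Longrightarrow> emeasure (algS Q C t n i) (space Q) < \<infinity>"
    and VC: "\<And>i. i \<in> {1..t} \<Longrightarrow> V \<in> C i" and IVQ: "Idiv V Q < \<infinity>"
    and i: "i \<in> {1..t}"
  shows "alg_invariant Q V (algS Q C t n i) (algP Q C t n i) \<and>
    (0 < n \<longrightarrow> is_Iproj (algS Q C t n i) (C i) (algP Q C t n i))"
  using i
proof (induction n arbitrary: i)
  case 0
  show ?case using alg_invariant_start[OF Q IVQ] by (simp add: algS_algP_simps)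
next
  case (Suc m)
  note round_IH = Suc.IH
  have V: "prob_space V" using VC[of 1] C[of 1] t by (auto simp: PMs_def)
  have step: "is_Iproj S (C i) (Iproj S (C i)) \<and> alg_invariant Q V S (Iproj S (C i))"
    if "alg_invariant Q V So Po" "alg_invariant Q V Sp Pp"
      and "S = density Q (\<lambda>x. RN_deriv Q Pp x * inverse (RN_deriv So Po x))"
      and "S = algS Q C t n i" and "i \<in> {1..t}" for So Po Sp Pp S n i
    using that fin[of i n] C[of i] VC[of i] by (intro alg_invariant_step[OF Q V IVQ]) auto
  have "alg_invariant Q V (algS Q C t (Suc m) (Suc j)) (algP Q C t (Suc m) (Suc j)) \<and>
      is_Iproj (algS Q C t (Suc m) (Suc j)) (C (Suc j)) (algP Q C t (Suc m) (Suc j))"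
    if "Suc j \<le> t" for j
    using that
  proof (induction j)
    case 0
    have "Suc 0 \<in> {1..t}" "t \<in> {1..t}" using t by auto
    with round_IH show ?case
      unfolding algS_algP_simps(4)
      by (intro conjI step[OF _ _ algS_algP_simps(3) refl, THEN conjunct2]
          step[OF _ _ algS_algP_simps(3) refl, THEN conjunct1]) auto
  next
    case (Suc j)
    then have "Suc (Suc j) \<in> {1..t}" by simp
    with Suc round_IH show ?case
      unfolding algS_algP_simps(6)
      by (intro conjI step[OF _ _ algS_algP_simps(5) refl, THEN conjunct2]
          step[OF _ _ algS_algP_simps(5) refl, THEN conjunct1]) auto
  qed
  then show ?case
    using Suc.prems by (cases i) auto
qed

theorem lemma3p1:
  fixes Q :: "'a measure" and C :: "nat \<Rightarrow> 'a measure set" and t :: nat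
  assumes "prob_space Q"
    and "t \<ge> 1"
    and "\<forall>i\<in>{1..t}. C i \<subseteq> PMs Q \<and> variation_closed Q (C i) \<and> convex_PMs Q (C i)"
    and "(SUP n. SUP i\<in>{1..t}. emeasure (algS Q C t n i) (space Q)) < \<infinity>"
    and "\<exists>V\<in>(\<Inter>i\<in>{1..t}. C i). Idiv V Q < \<infinity>"
  shows "\<forall>n\<ge>1. \<forall>i\<in>{1..t}.
           is_Iproj (algS Q C t n i) (C i) (algP Q C t n i)
         \<and> Idiv (algP Q C t n i) (algS Q C t n i) < \<infinity>
         \<and> density (algS Q C t n i) (RN_deriv (algS Q C t n i) (algP Q C t n i)) = algP Q C t n i"
proof (intro allI impI ballI)
  fix n i :: nat assume n: "n \<ge> 1" and i: "i \<in> {1..t}"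
  obtain V where VC: "\<And>i. i \<in> {1..t} \<Longrightarrow> V \<in> C i" and IVQ: "Idiv V Q < \<infinity>"
    using assms(5) by blast
  have fin: "emeasure (algS Q C t n i) (space Q) < \<infinity>" if "i \<in> {1..t}" for n i
  proof -
    have "emeasure (algS Q C t n i) (space Q) \<le> (SUP i\<in>{1..t}. emeasure (algS Q C t n i) (space Q))"
      by (rule SUP_upper[OF that])
    also have "\<dots> \<le> (SUP n. SUP i\<in>{1..t}. emeasure (algS Q C t n i) (space Q))"
      by (rule SUP_upper) simp
    finally show ?thesis using assms(4) by (rule le_less_trans)
  qed
  have inv: "alg_invariant Q V (algS Q C t n i) (algP Q C t n i)"
    and isI: "is_Iproj (algS Q C t n i) (C i) (algP Q C t n i)"
    using alg_invariant_algS_algP[OF assms(1,2) _ fin VC IVQ i] assms(3) n by auto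
  moreover have "Idiv (algP Q C t n i) (algS Q C t n i) < \<infinity>"
    using isI unfolding is_Iproj_def by blast
  moreover have "algP Q C t n i = density (algS Q C t n i) (RN_deriv (algS Q C t n i) (algP Q C t n i))"
    using inv unfolding alg_invariant_def by blast
  ultimately show "is_Iproj (algS Q C t n i) (C i) (algP Q C t n i)
      \<and> Idiv (algP Q C t n i) (algS Q C t n i) < \<infinity>
      \<and> density (algS Q C t n i) (RN_deriv (algS Q C t n i) (algP Q C t n i)) = algP Q C t n i"
    by simp
qed

end
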